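(* Consider ${\sf BubbleRank}$ run for $n$ steps with parameter $\delta\in(0,1)$ and initial base list $\mathcal{R}_0$ in a stochastic click bandit on items $[K]$ satisfying Assumptions A1–A5 below with $\alpha(1)>\dots>\alpha(K)>0$. Then with probability at least $1 - \delta^{1/2}K^2 n$, the displayed lists satisfy $|\mathcal{V}(\mathbf{R}_t)| \le |\mathcal{V}_0| + K/2$ simultaneously for all $t \in [n]$.
   Context: Model. Items are $[K]$; a list $\mathcal{R}$ is an ordering of all $K$ items, $\mathcal{R}(k)$ is the item at position $k$, $\mathcal{R}^{-1}(i)$ the position of item $i$; $\Pi_K$ is the set of lists. At each time $t$, $(\mathbf{A}_t,\mathbf{X}_t)$ with $\mathbf{A}_t\in\{0,1\}^K$, $\mathbf{X}_t\in\{0,1\}^{\Pi_K\times[K]}$ is drawn i.i.d. from a product distribution; the learner chooses $\mathbf{R}_t$ and observes clicks $\mathbf{c}_t(k)=\mathbf{X}_t(\mathbf{R}_t,k)\mathbf{A}_t(\mathbf{R}_t(k))$. $\alpha=\mathbb{E}[\mathbf{A}_t]$, $\chi=\mathbb{E}[\mathbf{X}_t]$, $r(\mathcal{R},\alpha,\chi)=\sum_k\chi(\mathcal{R},k)\alpha(\mathcal{R}(k))$, $\mathcal{R}^*=(1,\dots,K)$. Assumptions, for all lists $\mathcal{R},\mathcal{R}'$ and positions $k<\ell$: (A1) $r(\mathcal{R},\alpha,\chi)\le r(\mathcal{R}^*,\alpha,\chi)$; (A2) $\{\mathcal{R}(1),\dots,\mathcal{R}(k-1)\}=\{\mathcal{R}'(1),\dots,\mathcal{R}'(k-1)\}\Rightarrow\chi(\mathcal{R},k)=\chi(\mathcal{R}',k)$;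 (A3) $\chi(\mathcal{R},k)\ge\chi(\mathcal{R},\ell)$; (A4) if $\mathcal{R},\mathcal{R}'$ differ only by exchanging the items at positions $k,\ell$, then $\alpha(\mathcal{R}(k))\le\alpha(\mathcal{R}(\ell))\iff\chi(\mathcal{R},\ell)\ge\chi(\mathcal{R}',\ell)$; (A5) $\chi(\mathcal{R},k)\ge\chi(\mathcal{R}^*,k)$. $\mathcal{V}(\mathcal{R})=\{(i,j)\in[K]^2: i<j,\ \mathcal{R}^{-1}(i)>\mathcal{R}^{-1}(j)\}$ and $\mathcal{V}_0=\mathcal{V}(\mathcal{R}_0)$. Algorithm ${\sf BubbleRank}$: set $\mathbf{s}_0(i,j)=\mathbf{n}_0(i,j)=0$, $\bar{\mathbf{R}}_1=\mathcal{R}_0$. For $t=1,\dots,n$: $h=t\bmod 2$, $\mathbf{R}_t\leftarrow\bar{\mathbf{R}}_t$; for $k=1,\dots,\lfloor(K-h)/2\rfloor$ with $i=\mathbf{R}_t(2k-1+h)$, $j=\mathbf{R}_t(2k+h)$: if $\mathbf{s}_{t-1}(i,j)\le2\sqrt{\mathbf{n}_{t-1}(i,j)\log(1/\delta)}$, exchange positions $2k-1+h$ and $2k+h$ of $\mathbf{R}_t$ with probability $1/2$. Display $\mathbf{R}_t$, observe $\mathbf{c}_t$. Set $\mathbf{s}_t=\mathbf{s}_{t-1}$, $\mathbf{n}_t=\mathbf{n}_{t-1}$; for each such $k$ with $i=\mathbf{R}_t(2k-1+h)$, $j=\mathbf{R}_t(2k+h)$: if $|\mathbf{c}_t(2k-1+h)-\mathbf{c}_t(2k+h)|=1$,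 add $\mathbf{c}_t(2k-1+h)-\mathbf{c}_t(2k+h)$ to $\mathbf{s}_t(i,j)$, its negative to $\mathbf{s}_t(j,i)$, and $1$ to $\mathbf{n}_t(i,j)$ and $\mathbf{n}_t(j,i)$. Then $\bar{\mathbf{R}}_{t+1}=\bar{\mathbf{R}}_t$ and for $k=1,\dots,K-1$ in order with $i=\bar{\mathbf{R}}_{t+1}(k)$, $j=\bar{\mathbf{R}}_{t+1}(k+1)$: if $\mathbf{s}_t(j,i)>2\sqrt{\mathbf{n}_t(j,i)\log(1/\delta)}$, exchange positions $k,k+1$ of $\bar{\mathbf{R}}_{t+1}$. *)

theory Defs
  imports "HOL-Probability.Probability"
begin

text \<open>Items are 1..K. A list is a Isabelle list R of items; the item at
  (1-indexed) position k is R ! (k-1). Positions are 1-indexed throughout.\<close>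

definition is_list :: "nat \<Rightarrow> nat list \<Rightarrow> bool" where
  "is_list K R \<longleftrightarrow> distinct R \<and> set R = {1..K}"

definition opt_list :: "nat \<Rightarrow> nat list" where
  "opt_list K = [1..<K+1]"

definition item_at :: "nat list \<Rightarrow> nat \<Rightarrow> nat" where
  "item_at R k = R ! (k - 1)"

definition pos :: "nat list \<Rightarrow> nat \<Rightarrow> nat" where
  "pos R i = (LEAST k. R ! k = i) + 1"

definition swap_pos :: "nat list \<Rightarrow> nat \<Rightarrow> nat \<Rightarrow> nat list" where
  "swap_pos R k l = R[k - 1 := R ! (l - 1), l - 1 := R ! (k - 1)]"

definition inv_pairs :: "nat \<Rightarrow> nat list \<Rightarrow> (nat \<times> nat) set" where
  "inv_pairs K R = {(i, j). i \<in> {1..K} \<and> j \<in> {1..K} \<and> i < j \<and> pos R i > pos R j}"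

text \<open>Environment: attraction A with independent Bernoulli(alpha i) coordinates,
  independent of the examination matrix X drawn from the arbitrary distribution DX.\<close>
definition env :: "(nat \<Rightarrow> real) \<Rightarrow> nat \<Rightarrow> (nat list \<Rightarrow> nat \<Rightarrow> bool) pmf
      \<Rightarrow> ((nat \<Rightarrow> bool) \<times> (nat list \<Rightarrow> nat \<Rightarrow> bool)) pmf" where
  "env \<alpha> K DX = pair_pmf (Pi_pmf {1..K} False (\<lambda>i. bernoulli_pmf (\<alpha> i))) DX"

definition chi :: "(nat list \<Rightarrow> nat \<Rightarrow> bool) pmf \<Rightarrow> nat list \<Rightarrow> nat \<Rightarrow> real" where
  "chi DX R k = measure_pmf.prob DX {X. X R k}"

definition reward :: "nat \<Rightarrow> (nat \<Rightarrow> real) \<Rightarrow> (nat list \<Rightarrow> nat \<Rightarrow> bool) pmf \<Rightarrow> nat list \<Rightarrow> real" where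
  "reward K \<alpha> DX R = (\<Sum>k = 1..K. chi DX R k * \<alpha> (item_at R k))"

definition click_assms :: "nat \<Rightarrow> (nat \<Rightarrow> real) \<Rightarrow> (nat list \<Rightarrow> nat \<Rightarrow> bool) pmf \<Rightarrow> bool" where
  "click_assms K \<alpha> DX \<longleftrightarrow>
     (\<forall>R. is_list K R \<longrightarrow> reward K \<alpha> DX R \<le> reward K \<alpha> DX (opt_list K)) \<and>
     (\<forall>R R' k. is_list K R \<longrightarrow> is_list K R' \<longrightarrow> k \<in> {1..K} \<longrightarrow>
        set (take (k - 1) R) = set (take (k - 1) R') \<longrightarrow> chi DX R k = chi DX R' k) \<and>
     (\<forall>R k l. is_list K R \<longrightarrow> 1 \<le> k \<longrightarrow> k < l \<longrightarrow> l \<le> K \<longrightarrow> chi DX R k \<ge> chi DX R l) \<and>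
     (\<forall>R k l. is_list K R \<longrightarrow> 1 \<le> k \<longrightarrow> k < l \<longrightarrow> l \<le> K \<longrightarrow>
        (\<alpha> (item_at R k) \<le> \<alpha> (item_at R l) \<longleftrightarrow> chi DX R l \<ge> chi DX (swap_pos R k l) l)) \<and>
     (\<forall>R k. is_list K R \<longrightarrow> k \<in> {1..K} \<longrightarrow> chi DX R k \<ge> chi DX (opt_list K) k)"

type_synonym stats = "nat \<Rightarrow> nat \<Rightarrow> int"
type_synonym counts = "nat \<Rightarrow> nat \<Rightarrow> nat"
type_synonym br_state = "stats \<times> counts \<times> nat list"

definition conf_rad :: "real \<Rightarrow> nat \<Rightarrow> real" where
  "conf_rad \<delta> m = 2 * sqrt (real m * ln (1 / \<delta>))"

definition rand_pair :: "real \<Rightarrow> nat \<Rightarrow> stats \<Rightarrow> counts \<Rightarrow> nat \<Rightarrow> nat list \<Rightarrow> nat list pmf" where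
  "rand_pair \<delta> h s n k R =
     (let p = 2 * k - 1 + h; q = 2 * k + h; i = item_at R p; j = item_at R q in
      if real_of_int (s i j) \<le> conf_rad \<delta> (n i j)
      then map_pmf (\<lambda>b. if b then swap_pos R p q else R) (bernoulli_pmf (1/2))
      else return_pmf R)"

definition randomize :: "real \<Rightarrow> nat \<Rightarrow> nat \<Rightarrow> stats \<Rightarrow> counts \<Rightarrow> nat list \<Rightarrow> nat list pmf" where
  "randomize \<delta> K h s n Rb =
     fold (\<lambda>k M. bind_pmf M (rand_pair \<delta> h s n k)) [1..<(K - h) div 2 + 1] (return_pmf Rb)"

definition upd_pair :: "nat \<Rightarrow> nat list \<Rightarrow> (nat \<Rightarrow> bool) \<Rightarrow> nat \<Rightarrow> stats \<times> counts \<Rightarrow> stats \<times> counts" where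
  "upd_pair h R c k sn =
     (let p = 2 * k - 1 + h; q = 2 * k + h; i = item_at R p; j = item_at R q;
          s = fst sn; n = snd sn in
      if c p \<noteq> c q then
        (let d = (if c p then 1 else -1 :: int) in
          ((\<lambda>a b. if (a, b) = (i, j) then s i j + d else if (a, b) = (j, i) then s j i - d else s a b),
           (\<lambda>a b. if (a, b) = (i, j) \<or> (a, b) = (j, i) then n a b + 1 else n a b)))
      else (s, n))"

definition bubble_step :: "real \<Rightarrow> stats \<Rightarrow> counts \<Rightarrow> nat \<Rightarrow> nat list \<Rightarrow> nat list" where
  "bubble_step \<delta> s n k R =
     (let i = item_at R k; j = item_at R (k + 1) in
      if real_of_int (s j i) > conf_rad \<delta> (n j i) then swap_pos R k (k + 1) else R)"

definition br_step :: "(nat \<Rightarrow> real) \<Rightarrow> (nat list \<Rightarrow> nat \<Rightarrow> bool) pmf \<Rightarrow> real \<Rightarrow> nat \<Rightarrow> nat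
      \<Rightarrow> br_state \<Rightarrow> (nat list \<times> br_state) pmf" where
  "br_step \<alpha> DX \<delta> K t st =
     (case st of (s, n, Rb) \<Rightarrow>
       (let h = t mod 2 in
        bind_pmf (randomize \<delta> K h s n Rb) (\<lambda>R.
        bind_pmf (env \<alpha> K DX) (\<lambda>(A, X).
          let c = (\<lambda>k. X R k \<and> A (item_at R k));
              sn' = fold (upd_pair h R c) [1..<(K - h) div 2 + 1] (s, n);
              Rb' = fold (bubble_step \<delta> (fst sn') (snd sn')) [1..<K] Rb
          in return_pmf (R, (fst sn', snd sn', Rb'))))))"

primrec br_run :: "(nat \<Rightarrow> real) \<Rightarrow> (nat list \<Rightarrow> nat \<Rightarrow> bool) pmf \<Rightarrow> real \<Rightarrow> nat \<Rightarrow> nat list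
      \<Rightarrow> nat \<Rightarrow> (nat list list \<times> br_state) pmf" where
  "br_run \<alpha> DX \<delta> K R0 0 = return_pmf ([], (\<lambda>_ _. 0, \<lambda>_ _. 0, R0))"
| "br_run \<alpha> DX \<delta> K R0 (Suc t) =
     bind_pmf (br_run \<alpha> DX \<delta> K R0 t) (\<lambda>(Rs, st).
       map_pmf (\<lambda>(R, st'). (Rs @ [R], st')) (br_step \<alpha> DX \<delta> K (Suc t) st))"

definition displayed :: "(nat \<Rightarrow> real) \<Rightarrow> (nat list \<Rightarrow> nat \<Rightarrow> bool) pmf \<Rightarrow> real \<Rightarrow> nat \<Rightarrow> nat list
      \<Rightarrow> nat \<Rightarrow> nat list list pmf" where
  "displayed \<alpha> DX \<delta> K R0 n = map_pmf fst (br_run \<alpha> DX \<delta> K R0 n)"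

end

theory Submission
  imports Defs
begin

text \<open>While the statistics are sound, i.e. no correctly ordered pair a < b has s(b, a) above its
  confidence radius, the bubble pass only exchanges inverted neighbours, so the base list never
  gains inversions, and randomizing at most K/2 disjoint adjacent pairs adds at most K/2 inversions
  to the displayed list. It remains to bound the probability that the statistics ever become
  unsound. For a < b and \<lambda> \<ge> 0, exp(\<lambda> s(b, a) - \<lambda>^2 n(b, a)) is a supermartingale while they
  are sound: a comparison of a and b in which exactly one of them is clicked moves s(b, a) by \<plusminus>1
  and n(b, a) by 1, the bound cosh \<lambda> \<le> exp \<lambda>^2 controls the fluctuation, and by A2--A4 the drift
  \<chi>(pos b) \<alpha>(b) - \<chi>(pos a) \<alpha>(a) is nonpositive on average over the random exchange of the pair
  (when b is ahead of a, soundness guarantees that the pair is still randomized). Summing these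
  supermartingales over all pairs and over \<lambda> = sqrt(log(1/\<delta>)/m), m \<le> n, gives a potential that
  starts at most \<delta> K^2 n and is at least 1 once a statistic is unsound; stopped when the run leaves the
  good event, it bounds the failure probability by \<delta> K^2 n \<le> sqrt \<delta> K^2 n.\<close>

section \<open>Rankings and adjacent exchanges\<close>

lemma is_list_length: "is_list K R \<Longrightarrow> length R = K"
  unfolding is_list_def using distinct_card[of R] by auto

lemma is_list_nth_mem: "is_list K R \<Longrightarrow> m < K \<Longrightarrow> R ! m \<in> {1..K}"
  using is_list_length unfolding is_list_def by (metis nth_mem)

lemma is_list_obtain_index:
  assumes "is_list K R" "x \<in> {1..K}"
  obtains m where "m < K" "R ! m = x"
  using assms is_list_length unfolding is_list_def by (metis in_set_conv_nth)

lemma is_list_nth_eq_iff: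
  "is_list K R \<Longrightarrow> m < K \<Longrightarrow> m' < K \<Longrightarrow> R ! m = R ! m' \<longleftrightarrow> m = m'"
  using is_list_length unfolding is_list_def by (simp add: nth_eq_iff_index_eq)

lemma pos_nth:
  assumes "is_list K R" "m < K"
  shows "pos R (R ! m) = Suc m"
proof -
  have "(LEAST k. R ! k = R ! m) = m"
  proof (rule Least_equality)
    show "m \<le> k" if "R ! k = R ! m" for k
    proof (rule ccontr)
      assume "\<not> m \<le> k"
      then have "k < K" "k \<noteq> m" using assms(2) by auto
      then show False using that is_list_nth_eq_iff[OF assms(1) _ assms(2)] by blast
    qed
  qed simp
  then show ?thesis unfolding pos_def by simp
qed

lemma nth_pos:
  assumes "is_list K R" "x \<in> {1..K}"
  shows "R ! (pos R x - 1) = x"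
proof -
  obtain m where "m < K" "R ! m = x" using is_list_obtain_index[OF assms] .
  then show ?thesis using pos_nth[OF assms(1)] by auto
qed

lemma pos_eq_Suc_iff:
  assumes "is_list K R" "x \<in> {1..K}" "m < K"
  shows "pos R x = Suc m \<longleftrightarrow> R ! m = x"
proof -
  obtain m' where "m' < K" "R ! m' = x" using is_list_obtain_index[OF assms(1,2)] .
  then show ?thesis using pos_nth[OF assms(1)] is_list_nth_eq_iff[OF assms(1) assms(3)] by auto
qed

lemma length_swap_pos [simp]: "length (swap_pos R k l) = length R"
  unfolding swap_pos_def by simp

lemma nth_swap_adjacent:
  "Suc i < length R \<Longrightarrow>
   swap_pos R (Suc i) (Suc (Suc i)) ! m =
     (if m = i then R ! Suc i else if m = Suc i then R ! i else R ! m)"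
  unfolding swap_pos_def by (auto simp: nth_list_update)

lemma swap_adjacent_involutive:
  "Suc i < length R \<Longrightarrow> swap_pos (swap_pos R (Suc i) (Suc (Suc i))) (Suc i) (Suc (Suc i)) = R"
  by (rule nth_equalityI) (auto simp: nth_swap_adjacent)

lemma is_list_swap_adjacent:
  "is_list K R \<Longrightarrow> Suc i < K \<Longrightarrow> is_list K (swap_pos R (Suc i) (Suc (Suc i)))"
  using is_list_length[of K R] unfolding is_list_def swap_pos_def by auto

lemma pos_swap_adjacent:
  assumes R: "is_list K R" and i: "Suc i < K" and x: "x \<in> {1..K}"
  shows "pos (swap_pos R (Suc i) (Suc (Suc i))) x =
    (if pos R x = Suc i then Suc (Suc i) else if pos R x = Suc (Suc i) then Suc i else pos R x)"
proof -
  let ?R = "swap_pos R (Suc i) (Suc (Suc i))"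
  have L: "Suc i < length R" using is_list_length[OF R] i by simp
  obtain m where m: "m < K" "R ! m = x" using is_list_obtain_index[OF R x] .
  define m' where "m' = (if m = i then Suc i else if m = Suc i then i else m)"
  have "?R ! m' = x" "m' < K" using m i unfolding m'_def by (auto simp: nth_swap_adjacent[OF L])
  then have "pos ?R x = Suc m'" using pos_nth[OF is_list_swap_adjacent[OF R i]] by metis
  moreover have "pos R x = Suc m" using pos_nth[OF R m(1)] m(2) by simp
  ultimately show ?thesis unfolding m'_def by auto
qed

lemma finite_inv_pairs: "finite (inv_pairs K R)"
  by (rule finite_subset[of _ "{1..K} \<times> {1..K}"]) (auto simp: inv_pairs_def)

lemma inv_pairs_swap_adjacent:
  assumes R: "is_list K R" and i: "Suc i < K"
  shows "inv_pairs K (swap_pos R (Suc i) (Suc (Suc i)))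
           \<subseteq> insert (min (R ! i) (R ! Suc i), max (R ! i) (R ! Suc i)) (inv_pairs K R)"
proof
  fix p assume "p \<in> inv_pairs K (swap_pos R (Suc i) (Suc (Suc i)))"
  then obtain x y where xy: "p = (x, y)" "x \<in> {1..K}" "y \<in> {1..K}" "x < y"
    and inv: "pos (swap_pos R (Suc i) (Suc (Suc i))) y < pos (swap_pos R (Suc i) (Suc (Suc i))) x"
    unfolding inv_pairs_def by auto
  have "pos R x \<noteq> pos R y" using nth_pos[OF R xy(2)] nth_pos[OF R xy(3)] xy(4) by (metis less_irrefl)
  show "p \<in> insert (min (R ! i) (R ! Suc i), max (R ! i) (R ! Suc i)) (inv_pairs K R)"
  proof (cases "{pos R x, pos R y} = {Suc i, Suc (Suc i)}")
    case True
    then have "{x, y} = {R ! i, R ! Suc i}"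
      using pos_eq_Suc_iff[OF R xy(2)] pos_eq_Suc_iff[OF R xy(3)] i by (auto simp: doubleton_eq_iff)
    then show ?thesis using xy(1,4) by (auto simp: doubleton_eq_iff)
  next
    case False
    then have "pos R y < pos R x"
      using inv \<open>pos R x \<noteq> pos R y\<close>
      unfolding pos_swap_adjacent[OF R i xy(2)] pos_swap_adjacent[OF R i xy(3)]
      by (auto split: if_splits)
    then show ?thesis using xy unfolding inv_pairs_def by auto
  qed
qed

lemma inv_pairs_swap_adjacent_descent:
  assumes R: "is_list K R" and i: "Suc i < K" and desc: "R ! Suc i < R ! i"
  shows "inv_pairs K (swap_pos R (Suc i) (Suc (Suc i))) \<subseteq> inv_pairs K R"
proof -
  have "(R ! Suc i, R ! i) \<in> inv_pairs K R"
    using desc pos_nth[OF R] is_list_nth_mem[OF R] i unfolding inv_pairs_def by auto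
  then show ?thesis using inv_pairs_swap_adjacent[OF R i] desc by auto
qed

lemma card_inv_pairs_swap_adjacent:
  assumes "is_list K R" "Suc i < K"
  shows "card (inv_pairs K (swap_pos R (Suc i) (Suc (Suc i)))) \<le> card (inv_pairs K R) + 1"
proof -
  have "card (inv_pairs K (swap_pos R (Suc i) (Suc (Suc i))))
      \<le> card (insert (min (R ! i) (R ! Suc i), max (R ! i) (R ! Suc i)) (inv_pairs K R))"
    using inv_pairs_swap_adjacent[OF assms] finite_inv_pairs by (intro card_mono) auto
  also have "\<dots> \<le> card (inv_pairs K R) + 1"
    using finite_inv_pairs by (simp add: card_insert_if)
  finally show ?thesis .
qed

lemma set_take_swap_adjacent:
  assumes "Suc i < length R" "m \<le> i \<or> Suc (Suc i) \<le> m"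
  shows "set (take m (swap_pos R (Suc i) (Suc (Suc i)))) = set (take m R)"
  using assms(2)
proof
  assume "m \<le> i"
  then show ?thesis unfolding swap_pos_def by simp
next
  assume m: "Suc (Suc i) \<le> m"
  then have "take m (swap_pos R (Suc i) (Suc (Suc i)))
      = (take m R)[i := take m R ! Suc i, Suc i := take m R ! i]"
    unfolding swap_pos_def by (simp add: take_update_swap)
  also have "set \<dots> = set (take m R)"
    using m assms(1) by (intro set_swap) auto
  finally show ?thesis .
qed

section \<open>The bubble pass under sound statistics\<close>

text \<open>The good event of the analysis: no correctly ordered pair has been certified as inverted.\<close>
definition sound_stats :: "nat \<Rightarrow> real \<Rightarrow> stats \<Rightarrow> counts \<Rightarrow> bool" where
  "sound_stats K \<delta> s n \<longleftrightarrow>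
     (\<forall>a b. 1 \<le> a \<longrightarrow> a < b \<longrightarrow> b \<le> K \<longrightarrow> real_of_int (s b a) \<le> conf_rad \<delta> (n b a))"

lemma bubble_step_sound:
  assumes sound: "sound_stats K \<delta> s n" and R: "is_list K R" and i: "Suc i < K"
  shows "is_list K (bubble_step \<delta> s n (Suc i) R)
    \<and> inv_pairs K (bubble_step \<delta> s n (Suc i) R) \<subseteq> inv_pairs K R"
proof (cases "conf_rad \<delta> (n (R ! Suc i) (R ! i)) < real_of_int (s (R ! Suc i) (R ! i))")
  case True
  have "R ! i \<in> {1..K}" "R ! Suc i \<in> {1..K}" using is_list_nth_mem[OF R] i by auto
  then have "\<not> R ! i < R ! Suc i"
    using True sound unfolding sound_stats_def by (meson atLeastAtMost_iff not_le)
  then have "R ! Suc i < R ! i" using is_list_nth_eq_iff[OF R, of i "Suc i"] i by auto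
  moreover have "bubble_step \<delta> s n (Suc i) R = swap_pos R (Suc i) (Suc (Suc i))"
    using True unfolding bubble_step_def item_at_def by simp
  ultimately show ?thesis
    using is_list_swap_adjacent[OF R i] inv_pairs_swap_adjacent_descent[OF R i] by simp
next
  case False
  then show ?thesis using R unfolding bubble_step_def item_at_def by simp
qed

lemma fold_bubble_step_sound:
  assumes sound: "sound_stats K \<delta> s n"
  shows "is_list K R \<Longrightarrow> set ks \<subseteq> {1..<K} \<Longrightarrow>
    is_list K (fold (bubble_step \<delta> s n) ks R)
    \<and> inv_pairs K (fold (bubble_step \<delta> s n) ks R) \<subseteq> inv_pairs K R"
proof (induction ks arbitrary: R)
  case (Cons k ks)
  then obtain i where i: "k = Suc i" "Suc i < K" by (cases k) auto
  then show ?case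
    using Cons.IH[of "bubble_step \<delta> s n k R"] Cons.prems
      bubble_step_sound[OF sound Cons.prems(1) i(2)] by auto
qed simp

lemma fold_bind_pmf:
  "fold (\<lambda>k M. bind_pmf M (g k)) ks M
     = bind_pmf M (\<lambda>x. fold (\<lambda>k M. bind_pmf M (g k)) ks (return_pmf x))"
proof (induction ks arbitrary: M)
  case Nil
  then show ?case by (simp add: bind_return_pmf')
next
  case (Cons k ks)
  have "fold (\<lambda>k M. bind_pmf M (g k)) (k # ks) M
      = fold (\<lambda>k M. bind_pmf M (g k)) ks (bind_pmf M (g k))"
    by simp
  also have "\<dots> = bind_pmf (bind_pmf M (g k)) (\<lambda>x. fold (\<lambda>k M. bind_pmf M (g k)) ks (return_pmf x))"
    by (rule Cons.IH)
  also have "\<dots> = bind_pmf M (\<lambda>y. fold (\<lambda>k M. bind_pmf M (g k)) (k # ks) (return_pmf y))"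
    using Cons.IH[of "g k _"] by (simp add: bind_assoc_pmf bind_return_pmf)
  finally show ?case .
qed

lemma fold_bind_pmf_Cons:
  "fold (\<lambda>k M. bind_pmf M (g k)) (k # ks) (return_pmf x)
     = bind_pmf (g k x) (\<lambda>y. fold (\<lambda>k M. bind_pmf M (g k)) ks (return_pmf y))"
  by (simp add: bind_return_pmf fold_bind_pmf[of g ks "g k x"])

lemma pair_positions:
  assumes "h \<le> 1" "k \<in> {1..(K - h) div 2}"
  shows "2*k-1+h = Suc (2*k-2+h)" "2*k+h = Suc (Suc (2*k-2+h))" "Suc (2*k-2+h) < K"
proof -
  have "1 \<le> k" "2 * k \<le> K - h" using assms by auto
  then show "2*k-1+h = Suc (2*k-2+h)" "2*k+h = Suc (Suc (2*k-2+h))" "Suc (2*k-2+h) < K"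
    by linarith+
qed

lemma pair_positions_disjoint:
  assumes "k \<in> {1..(K - h) div 2}" "k' \<in> {1..(K - h) div 2}" "k \<noteq> k'"
  shows "Suc (2*k'-2+h) < 2*k-2+h \<or> Suc (2*k-2+h) < 2*k'-2+h"
proof -
  have "1 \<le> k" "1 \<le> k'" using assms by auto
  then show ?thesis using assms(3) by linarith
qed

lemma rand_pair_conv:
  assumes "1 \<le> k"
  shows "rand_pair \<delta> h s n k R =
    (let i = 2*k-2+h in
     if real_of_int (s (R ! i) (R ! Suc i)) \<le> conf_rad \<delta> (n (R ! i) (R ! Suc i))
     then map_pmf (\<lambda>b. if b then swap_pos R (Suc i) (Suc (Suc i)) else R) (bernoulli_pmf (1/2))
     else return_pmf R)"
proof -
  define i where "i = 2*k-2+h"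
  have pq: "2*k-1+h = Suc i" "2*k+h = Suc (Suc i)" using assms unfolding i_def by auto
  show ?thesis unfolding rand_pair_def item_at_def Let_def pq i_def[symmetric] by simp
qed

lemma set_pmf_rand_pair:
  assumes "1 \<le> k" "R' \<in> set_pmf (rand_pair \<delta> h s n k R)"
  shows "R' = R \<or> R' = swap_pos R (Suc (2*k-2+h)) (Suc (Suc (2*k-2+h)))"
  using assms(2) unfolding rand_pair_conv[OF assms(1)] Let_def by (auto split: if_splits)

lemma fold_rand_pair_support:
  assumes h: "h \<le> 1"
  shows "is_list K R \<Longrightarrow> set ks \<subseteq> {1..(K - h) div 2} \<Longrightarrow>
    R' \<in> set_pmf (fold (\<lambda>k M. bind_pmf M (rand_pair \<delta> h s n k)) ks (return_pmf R)) \<Longrightarrow>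
    is_list K R' \<and> card (inv_pairs K R') \<le> card (inv_pairs K R) + length ks"
proof (induction ks arbitrary: R)
  case (Cons k ks)
  from Cons.prems(3) obtain R1 where R1: "R1 \<in> set_pmf (rand_pair \<delta> h s n k R)"
    and R': "R' \<in> set_pmf (fold (\<lambda>k M. bind_pmf M (rand_pair \<delta> h s n k)) ks (return_pmf R1))"
    unfolding fold_bind_pmf_Cons by auto
  have k: "k \<in> {1..(K - h) div 2}" using Cons.prems(2) by simp
  then have i: "Suc (2*k-2+h) < K" by (rule pair_positions(3)[OF h])
  have "R1 = R \<or> R1 = swap_pos R (Suc (2*k-2+h)) (Suc (Suc (2*k-2+h)))"
    using set_pmf_rand_pair[OF _ R1] k by simp
  then have "is_list K R1 \<and> card (inv_pairs K R1) \<le> card (inv_pairs K R) + 1"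
    using Cons.prems(1) is_list_swap_adjacent[OF Cons.prems(1) i]
      card_inv_pairs_swap_adjacent[OF Cons.prems(1) i] by auto
  then show ?case using Cons.IH[OF _ _ R'] Cons.prems(2) by fastforce
qed simp

lemma randomize_support:
  assumes "is_list K Rb" "h \<le> 1" "R \<in> set_pmf (randomize \<delta> K h s n Rb)"
  shows "is_list K R \<and> card (inv_pairs K R) \<le> card (inv_pairs K Rb) + (K - h) div 2"
proof -
  have "set [1..<(K - h) div 2 + 1] \<subseteq> {1..(K - h) div 2}" by auto
  from fold_rand_pair_support[OF assms(2,1) this assms(3)[unfolded randomize_def]] show ?thesis
    by (simp del: upt_Suc)
qed

lemma expectation_rand_pair:
  fixes f :: "nat list \<Rightarrow> real" and h :: nat
  assumes "1 \<le> k"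
  defines "i \<equiv> 2*k-2+h"
  shows "measure_pmf.expectation (rand_pair \<delta> h s n k R) f =
    (if real_of_int (s (R ! i) (R ! Suc i)) \<le> conf_rad \<delta> (n (R ! i) (R ! Suc i))
     then (f (swap_pos R (Suc i) (Suc (Suc i))) + f R) / 2 else f R)"
  unfolding rand_pair_conv[OF assms(1)] Let_def i_def by simp

text \<open>Pair k of a round of parity h sits at the 1-based positions 2k-1+h and 2k+h of BubbleRank,
  i.e. at the list indices 2k-2+h and 2k-1+h.\<close>
definition pair_items :: "nat \<Rightarrow> nat list \<Rightarrow> nat \<Rightarrow> nat set" where
  "pair_items h R k = {R ! (2*k-2+h), R ! (2*k-1+h)}"

definition compared :: "nat \<Rightarrow> nat \<Rightarrow> nat list \<Rightarrow> nat \<Rightarrow> nat \<Rightarrow> bool" where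
  "compared K h R a b \<longleftrightarrow> (\<exists>k\<in>{1..(K - h) div 2}. pair_items h R k = {a, b})"

lemma pair_items_unique:
  assumes R: "is_list K R" and h: "h \<le> 1"
    and k: "k \<in> {1..(K - h) div 2}" and k': "k' \<in> {1..(K - h) div 2}"
    and eq: "pair_items h R k = pair_items h R k'"
  shows "k = k'"
proof -
  define i where "i = 2*k-2+h"
  define j where "j = 2*k'-2+h"
  have ij: "Suc i < K" "Suc j < K" "2*k-1+h = Suc i" "2*k'-1+h = Suc j"
    using pair_positions[OF h k] pair_positions[OF h k'] unfolding i_def j_def by blast+
  have "(R ! i = R ! j \<and> R ! Suc i = R ! Suc j) \<or> (R ! i = R ! Suc j \<and> R ! Suc i = R ! j)"
    using eq unfolding pair_items_def i_def[symmetric] j_def[symmetric] ij(3,4)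
    by (auto simp: doubleton_eq_iff)
  moreover have iK: "i < K" "j < K" using ij(1,2) by auto
  ultimately have "i = j \<or> (i = Suc j \<and> Suc i = j)"
    using is_list_nth_eq_iff[OF R iK] is_list_nth_eq_iff[OF R iK(1) ij(2)]
      is_list_nth_eq_iff[OF R ij(1) iK(2)] by blast
  then have "i = j" by auto
  then show ?thesis using k k' unfolding i_def j_def by auto
qed

lemma upd_pair_unrelated:
  assumes k: "1 \<le> k" and ne: "pair_items h R k \<noteq> {a, b}"
  shows "fst (upd_pair h R c k (s, n)) b a = s b a \<and> snd (upd_pair h R c k (s, n)) b a = n b a"
proof -
  define i where "i = 2*k-2+h"
  have pq: "2*k-1+h = Suc i" "2*k+h = Suc (Suc i)" using k unfolding i_def by auto
  have "(R ! i, R ! Suc i) \<noteq> (b, a)" "(R ! Suc i, R ! i) \<noteq> (b, a)"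
    using ne unfolding pair_items_def i_def[symmetric] pq by auto
  then show ?thesis unfolding upd_pair_def item_at_def Let_def pq diff_Suc_1
    by (cases "c (Suc i)"; cases "c (Suc (Suc i))") auto
qed

lemma upd_pair_compared:
  assumes R: "is_list K R" and h: "h \<le> 1" and k: "k \<in> {1..(K - h) div 2}"
    and eq: "pair_items h R k = {a, b}" and ab: "a \<noteq> b"
  shows "fst (upd_pair h R c k (s, n)) b a = s b a + (of_bool (c (pos R b)) - of_bool (c (pos R a)))
       \<and> snd (upd_pair h R c k (s, n)) b a = n b a + of_bool (c (pos R b) \<noteq> c (pos R a))"
proof -
  define i where "i = 2*k-2+h"
  have pq: "2*k-1+h = Suc i" "2*k+h = Suc (Suc i)" and i: "Suc i < K"
    using pair_positions[OF h k] unfolding i_def by blast+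
  have pos: "pos R (R ! i) = Suc i" "pos R (R ! Suc i) = Suc (Suc i)" using pos_nth[OF R] i by auto
  have "(R ! i = a \<and> R ! Suc i = b) \<or> (R ! i = b \<and> R ! Suc i = a)"
    using eq unfolding pair_items_def i_def[symmetric] pq by (auto simp: doubleton_eq_iff)
  then show ?thesis
    using ab pos unfolding upd_pair_def item_at_def Let_def pq diff_Suc_1
    by (cases "c (Suc i)"; cases "c (Suc (Suc i))") auto
qed

lemma fold_upd_pair:
  assumes R: "is_list K R" and h: "h \<le> 1" and ab: "a \<noteq> b"
  shows "distinct ks \<Longrightarrow> set ks \<subseteq> {1..(K - h) div 2} \<Longrightarrow> fold (upd_pair h R c) ks (s, n) = (s', n') \<Longrightarrow>
    s' b a = s b a + (if \<exists>k\<in>set ks. pair_items h R k = {a, b}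
                       then of_bool (c (pos R b)) - of_bool (c (pos R a)) else 0)
    \<and> n' b a = n b a + of_bool ((\<exists>k\<in>set ks. pair_items h R k = {a, b}) \<and> c (pos R b) \<noteq> c (pos R a))"
proof (induction ks arbitrary: s n)
  case (Cons k ks)
  obtain s1 n1 where step: "upd_pair h R c k (s, n) = (s1, n1)" by fastforce
  have k: "k \<in> {1..(K - h) div 2}" using Cons.prems(2) by simp
  have "distinct ks" "set ks \<subseteq> {1..(K - h) div 2}" "fold (upd_pair h R c) ks (s1, n1) = (s', n')"
    using Cons.prems step by auto
  note IH = Cons.IH[OF this]
  show ?case
  proof (cases "pair_items h R k = {a, b}")
    case True
    have "\<not> (\<exists>k'\<in>set ks. pair_items h R k' = {a, b})"
    proof
      assume "\<exists>k'\<in>set ks. pair_items h R k' = {a, b}"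
      then obtain k' where k': "k' \<in> set ks" "pair_items h R k' = pair_items h R k" using True by auto
      then have "k' = k" using pair_items_unique[OF R h _ k] Cons.prems(2) by auto
      then show False using k'(1) Cons.prems(1) by simp
    qed
    then show ?thesis using IH upd_pair_compared[OF R h k True ab, of c s n] step True by auto
  next
    case False
    then show ?thesis using IH upd_pair_unrelated[OF _ False, of c s n] step k by auto
  qed
qed simp

lemma stats_update_round:
  assumes R: "is_list K R" and h: "h \<le> 1" and ab: "a \<noteq> b"
    and upd: "fold (upd_pair h R c) [1..<(K - h) div 2 + 1] (s, n) = (s', n')"
  shows "s' b a = s b a +
      (if compared K h R a b then of_bool (c (pos R b)) - of_bool (c (pos R a)) else 0)"
    and "n' b a = n b a + of_bool (compared K h R a b \<and> c (pos R b) \<noteq> c (pos R a))"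
proof -
  have "set [1..<(K - h) div 2 + 1] = {1..(K - h) div 2}" by auto
  with fold_upd_pair[OF R h ab _ _ upd]
  show "s' b a = s b a +
      (if compared K h R a b then of_bool (c (pos R b)) - of_bool (c (pos R a)) else 0)"
    and "n' b a = n b a + of_bool (compared K h R a b \<and> c (pos R b) \<noteq> c (pos R a))"
    unfolding compared_def by auto
qed

lemma pair_items_swap:
  assumes R: "is_list K R" and h: "h \<le> 1"
    and k: "k \<in> {1..(K - h) div 2}" and k': "k' \<in> {1..(K - h) div 2}"
  shows "pair_items h (swap_pos R (Suc (2*k-2+h)) (Suc (Suc (2*k-2+h)))) k' = pair_items h R k'"
proof -
  define i where "i = 2*k-2+h"
  define j where "j = 2*k'-2+h"
  let ?R = "swap_pos R (Suc i) (Suc (Suc i))"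
  have i: "Suc i < K" using pair_positions(3)[OF h k] unfolding i_def .
  then have L: "Suc i < length R" using is_list_length[OF R] by simp
  have j: "2*k'-1+h = Suc j" using pair_positions(1)[OF h k'] unfolding j_def .
  have "{?R ! j, ?R ! Suc j} = {R ! j, R ! Suc j}"
  proof (cases "k' = k")
    case True
    then have "j = i" unfolding i_def j_def by simp
    then show ?thesis using nth_swap_adjacent[OF L] by auto
  next
    case False
    then have "Suc j < i \<or> Suc i < j"
      using pair_positions_disjoint[OF k k'] unfolding i_def j_def by blast
    then show ?thesis using nth_swap_adjacent[OF L] by auto
  qed
  then show ?thesis unfolding pair_items_def i_def[symmetric] j_def[symmetric] j .
qed

lemma compared_swap:
  assumes "is_list K R" "h \<le> 1" "k \<in> {1..(K - h) div 2}"
  shows "compared K h (swap_pos R (Suc (2*k-2+h)) (Suc (Suc (2*k-2+h)))) a b = compared K h R a b"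
  unfolding compared_def using pair_items_swap[OF assms] by simp

lemma expectation_bind_pmf_bounded:
  fixes f :: "'b \<Rightarrow> real"
  assumes "\<And>x. \<bar>f x\<bar> \<le> B"
  shows "measure_pmf.expectation (bind_pmf M N) f
     = measure_pmf.expectation M (\<lambda>x. measure_pmf.expectation (N x) f)"
  unfolding measure_pmf_bind
  by (rule integral_bind[where K="count_space UNIV" and B=B and B'=1])
    (use assms measurable_measure_pmf[of N] in
      \<open>auto intro: measure_pmf.finite_measure_axioms simp: measure_pmf.emeasure_space_1\<close>)

lemma cosh_le_exp_square: "cosh x \<le> exp (x^2)" for x :: real
proof -
  have key: "exp l + exp (- l) \<le> 2 * exp (l^2)" if l: "0 \<le> l" for l :: real
  proof (cases "1 \<le> l")
    case True
    have "l \<le> l^2" using mult_left_mono[OF True l] by (simp add: power2_eq_square)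
    moreover have "- l \<le> l^2" using l zero_le_power2[of l] by linarith
    ultimately have "exp l \<le> exp (l^2)" "exp (- l) \<le> exp (l^2)" by simp_all
    then show ?thesis by linarith
  next
    case False
    have "exp l \<le> 1 + l + l^2" using exp_bound[OF l] False by simp
    moreover have "exp (- l) \<le> 1 - l + l^2"
    proof -
      have "1 \<le> (1 - l + l^2) * (1 + l)"
        using l by (simp add: algebra_simps power2_eq_square power3_eq_cube)
      then have "1 / (1 + l) \<le> 1 - l + l^2" using l by (simp add: field_simps)
      moreover have "exp (- l) \<le> 1 / (1 + l)"
        using exp_ge_add_one_self[of l] l by (simp add: exp_minus divide_simps)
      ultimately show ?thesis by linarith
    qed
    moreover have "1 + l^2 \<le> exp (l^2)" by (rule exp_ge_add_one_self)
    ultimately show ?thesis by linarith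
  qed
  have "exp x + exp (- x) = exp \<bar>x\<bar> + exp (- \<bar>x\<bar>)" by (cases "0 \<le> x") simp_all
  then show ?thesis using key[of "\<bar>x\<bar>"] unfolding cosh_field_def by simp
qed

lemma exp_tilt_factor_bounds:
  fixes l :: real
  assumes "0 \<le> l"
  shows "exp (- l - l^2) \<le> 1" and "exp (l - l^2) + exp (- l - l^2) \<le> 2"
proof -
  have "- l - l^2 \<le> 0" using assms zero_le_power2[of l] by linarith
  then show "exp (- l - l^2) \<le> 1" by simp
  have "exp (l - l^2) + exp (- l - l^2) = 2 * cosh l / exp (l^2)"
    unfolding cosh_field_def by (simp add: exp_diff add_divide_distrib)
  also have "\<dots> \<le> 2" using cosh_le_exp_square[of l] by (simp add: divide_le_eq)
  finally show "exp (l - l^2) + exp (- l - l^2) \<le> 2" .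
qed

lemma sqrt_div_mult_sqrt_mult:
  fixes m L :: real
  assumes "0 < m" "0 \<le> L"
  shows "sqrt (L / m) * sqrt (m * L) = L"
proof -
  have "sqrt (L / m) * sqrt (m * L) = sqrt (L^2)"
    unfolding real_sqrt_mult[symmetric] using assms by (simp add: power2_eq_square)
  then show ?thesis using assms by simp
qed

definition clicks :: "nat list \<Rightarrow> (nat \<Rightarrow> bool) \<times> (nat list \<Rightarrow> nat \<Rightarrow> bool) \<Rightarrow> nat \<Rightarrow> bool" where
  "clicks R \<omega> = (\<lambda>k. snd \<omega> R k \<and> fst \<omega> (item_at R k))"

definition next_state :: "real \<Rightarrow> nat \<Rightarrow> nat \<Rightarrow> stats \<Rightarrow> counts \<Rightarrow> nat list \<Rightarrow> nat list \<Rightarrow>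
    (nat \<Rightarrow> bool) \<times> (nat list \<Rightarrow> nat \<Rightarrow> bool) \<Rightarrow> br_state" where
  "next_state \<delta> K h s n Rb R \<omega> =
     (let sn' = fold (upd_pair h R (clicks R \<omega>)) [1..<(K - h) div 2 + 1] (s, n) in
      (fst sn', snd sn', fold (bubble_step \<delta> (fst sn') (snd sn')) [1..<K] Rb))"

lemma br_step_conv:
  "br_step \<alpha> DX \<delta> K t (s, n, Rb) = bind_pmf (randomize \<delta> K (t mod 2) s n Rb)
     (\<lambda>R. map_pmf (\<lambda>\<omega>. (R, next_state \<delta> K (t mod 2) s n Rb R \<omega>)) (env \<alpha> K DX))"
  unfolding br_step_def map_pmf_def next_state_def clicks_def Let_def split_beta by simp

lemma nn_integral_br_step:
  "(\<integral>\<^sup>+x. f x \<partial>br_step \<alpha> DX \<delta> K t (s, n, Rb)) =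
   (\<integral>\<^sup>+R. \<integral>\<^sup>+\<omega>. f (R, next_state \<delta> K (t mod 2) s n Rb R \<omega>)
      \<partial>env \<alpha> K DX \<partial>randomize \<delta> K (t mod 2) s n Rb)"
  unfolding br_step_conv by (simp add: nn_integral_map_pmf)

lemma set_pmf_br_step:
  "(R, st') \<in> set_pmf (br_step \<alpha> DX \<delta> K t (s, n, Rb)) \<Longrightarrow>
   R \<in> set_pmf (randomize \<delta> K (t mod 2) s n Rb) \<and> (\<exists>\<omega>. st' = next_state \<delta> K (t mod 2) s n Rb R \<omega>)"
  unfolding br_step_conv by auto

definition exp_tilt :: "real \<Rightarrow> nat \<Rightarrow> nat \<Rightarrow> stats \<Rightarrow> counts \<Rightarrow> real" where
  "exp_tilt l a b s n = exp (l * real_of_int (s b a) - l^2 * real (n b a))"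

lemma exp_tilt_pos: "0 < exp_tilt l a b s n"
  unfolding exp_tilt_def by simp

lemma exp_tilt_next_state:
  fixes l :: real and \<omega> :: "(nat \<Rightarrow> bool) \<times> (nat list \<Rightarrow> nat \<Rightarrow> bool)" and R :: "nat list"
  assumes R: "is_list K R" and h: "h \<le> 1" and ab: "a \<in> {1..K}" "b \<in> {1..K}" "a \<noteq> b"
  defines "C \<equiv> \<lambda>x. snd \<omega> R (pos R x) \<and> fst \<omega> x"
  shows "exp_tilt l a b (fst (next_state \<delta> K h s n Rb R \<omega>)) (fst (snd (next_state \<delta> K h s n Rb R \<omega>)))
    = exp_tilt l a b s n *
      (if compared K h R a b
       then (if C b \<and> \<not> C a then exp (l - l^2) else if C a \<and> \<not> C b then exp (- l - l^2) else 1)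
       else 1)"
proof -
  obtain s' n' where upd: "fold (upd_pair h R (clicks R \<omega>)) [1..<(K - h) div 2 + 1] (s, n) = (s', n')"
    by fastforce
  have "clicks R \<omega> (pos R x) = C x" if "x \<in> {1..K}" for x
    using nth_pos[OF R that] unfolding clicks_def item_at_def C_def by simp
  then show ?thesis
    unfolding exp_tilt_def next_state_def Let_def upd fst_conv snd_conv
      stats_update_round[OF R h ab(3) upd]
    using ab by (cases "compared K h R a b"; cases "C a"; cases "C b")
      (simp_all add: exp_add[symmetric] algebra_simps)
qed

section \<open>The drift of a pair\<close>

lemma chi_nonneg: "0 \<le> chi DX R k"
  unfolding chi_def by simp

lemma chi_le_1: "chi DX R k \<le> 1"
  unfolding chi_def by simp

locale bubblerank_model =
  fixes K :: nat and \<alpha> :: "nat \<Rightarrow> real" and DX :: "(nat list \<Rightarrow> nat \<Rightarrow> bool) pmf" and \<delta> :: real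
  assumes \<delta>_pos: "0 < \<delta>" and \<delta>_less_1: "\<delta> < 1"
    and \<alpha>_decreasing: "\<And>i j. 1 \<le> i \<Longrightarrow> i < j \<Longrightarrow> j \<le> K \<Longrightarrow> \<alpha> i > \<alpha> j"
    and \<alpha>_range: "\<And>i. i \<in> {1..K} \<Longrightarrow> 0 < \<alpha> i \<and> \<alpha> i \<le> 1"
    and click_model: "click_assms K \<alpha> DX"
begin

lemma chi_prefix_invariant:
  "is_list K R \<Longrightarrow> is_list K R' \<Longrightarrow> k \<in> {1..K} \<Longrightarrow>
   set (take (k - 1) R) = set (take (k - 1) R') \<Longrightarrow> chi DX R k = chi DX R' k"
  using click_model unfolding click_assms_def by blast

lemma chi_antimono: "is_list K R \<Longrightarrow> 1 \<le> k \<Longrightarrow> k < l \<Longrightarrow> l \<le> K \<Longrightarrow> chi DX R l \<le> chi DX R k"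
  using click_model unfolding click_assms_def by blast

lemma chi_swap_le:
  "is_list K R \<Longrightarrow> 1 \<le> k \<Longrightarrow> k < l \<Longrightarrow> l \<le> K \<Longrightarrow>
   \<alpha> (item_at R k) \<le> \<alpha> (item_at R l) \<Longrightarrow> chi DX (swap_pos R k l) l \<le> chi DX R l"
  using click_model unfolding click_assms_def by blast

text \<open>The expected increment of the statistic s(b, a) in a round that displays R.\<close>
definition drift :: "nat \<Rightarrow> nat \<Rightarrow> nat \<Rightarrow> nat list \<Rightarrow> real" where
  "drift h a b R =
     (if compared K h R a b then chi DX R (pos R b) * \<alpha> b - chi DX R (pos R a) * \<alpha> a else 0)"

lemma abs_drift_le_1:
  assumes "a \<in> {1..K}" "b \<in> {1..K}"
  shows "\<bar>drift h a b R\<bar> \<le> 1"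
proof -
  have "0 \<le> chi DX R k * \<alpha> c \<and> chi DX R k * \<alpha> c \<le> 1" if "c \<in> {1..K}" for k c
    using \<alpha>_range[OF that] chi_nonneg[of DX R k] chi_le_1[of DX R k] by (simp add: mult_le_one)
  then show ?thesis using assms unfolding drift_def by (smt (verit, best))
qed

lemma pos_chi_swap_adjacent_other:
  assumes R: "is_list K R" and i: "Suc i < K" and x: "x \<in> {1..K}"
    and px: "pos R x \<noteq> Suc i" "pos R x \<noteq> Suc (Suc i)"
  shows "pos (swap_pos R (Suc i) (Suc (Suc i))) x = pos R x
     \<and> chi DX (swap_pos R (Suc i) (Suc (Suc i))) (pos R x) = chi DX R (pos R x)"
proof -
  let ?R = "swap_pos R (Suc i) (Suc (Suc i))"
  have L: "Suc i < length R" using is_list_length[OF R] i by simp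
  obtain m where m: "m < K" "R ! m = x" using is_list_obtain_index[OF R x] .
  then have pm: "pos R x = Suc m" using pos_nth[OF R] by blast
  then have "m \<le> i \<or> Suc (Suc i) \<le> m" using px by auto
  then have "set (take m ?R) = set (take m R)" by (rule set_take_swap_adjacent[OF L])
  then have "chi DX ?R (Suc m) = chi DX R (Suc m)"
    using chi_prefix_invariant[OF is_list_swap_adjacent[OF R i] R] m(1) by auto
  then show ?thesis using pos_swap_adjacent[OF R i x] px pm by simp
qed

lemma drift_swap_unrelated:
  assumes R: "is_list K R" and h: "h \<le> 1" and k: "k \<in> {1..(K - h) div 2}"
    and ne: "pair_items h R k \<noteq> {a, b}"
  shows "drift h a b (swap_pos R (Suc (2*k-2+h)) (Suc (Suc (2*k-2+h)))) = drift h a b R"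
proof (cases "compared K h R a b")
  case False
  then show ?thesis unfolding drift_def compared_swap[OF R h k] by simp
next
  case True
  define i where "i = 2*k-2+h"
  have i: "Suc i < K" using pair_positions(3)[OF h k] unfolding i_def .
  obtain k' where k': "k' \<in> {1..(K - h) div 2}" "pair_items h R k' = {a, b}"
    using True unfolding compared_def by blast
  define j where "j = 2*k'-2+h"
  have j: "2*k'-1+h = Suc j" "Suc j < K" using pair_positions[OF h k'(1)] unfolding j_def by blast+
  have "k' \<noteq> k" using k'(2) ne by auto
  then have sep: "Suc j < i \<or> Suc i < j"
    using pair_positions_disjoint[OF k k'(1)] unfolding i_def j_def by blast
  have "{a, b} = {R ! j, R ! Suc j}"
    using k'(2) unfolding pair_items_def j_def[symmetric] j(1) by simp
  then have "pos R x \<in> {Suc j, Suc (Suc j)} \<and> x \<in> {1..K}" if "x \<in> {a, b}" for x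
    using that pos_nth[OF R] is_list_nth_mem[OF R] j(2) by auto
  then have "pos R x \<noteq> Suc i \<and> pos R x \<noteq> Suc (Suc i) \<and> x \<in> {1..K}" if "x \<in> {a, b}" for x
    using that sep by fastforce
  then have "pos (swap_pos R (Suc i) (Suc (Suc i))) x = pos R x
     \<and> chi DX (swap_pos R (Suc i) (Suc (Suc i))) (pos R x) = chi DX R (pos R x)" if "x \<in> {a, b}" for x
    using that pos_chi_swap_adjacent_other[OF R i] by blast
  moreover have "compared K h (swap_pos R (Suc i) (Suc (Suc i))) a b"
    using compared_swap[OF R h k] True unfolding i_def by simp
  ultimately show ?thesis using True unfolding drift_def i_def[symmetric] by simp
qed

lemma drift_in_order:
  assumes R: "is_list K R" and i: "Suc i < K" and ab: "R ! i = a" "R ! Suc i = b"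
    and cmp: "compared K h R a b"
  shows "drift h a b R = chi DX R (Suc (Suc i)) * \<alpha> b - chi DX R (Suc i) * \<alpha> a"
  using pos_nth[OF R, of i] pos_nth[OF R, of "Suc i"] i ab cmp unfolding drift_def by auto

lemma drift_in_order_nonpos:
  assumes R: "is_list K R" and i: "Suc i < K"
    and ab: "R ! i = a" "R ! Suc i = b" "1 \<le> a" "a < b" "b \<le> K"
  shows "drift h a b R \<le> 0"
proof (cases "compared K h R a b")
  case True
  have "chi DX R (Suc (Suc i)) \<le> chi DX R (Suc i)" using chi_antimono[OF R] i by auto
  moreover have "\<alpha> b < \<alpha> a" "0 < \<alpha> b" using \<alpha>_decreasing[OF ab(3-5)] \<alpha>_range[of b] ab(3-5) by auto
  ultimately have "chi DX R (Suc (Suc i)) * \<alpha> b \<le> chi DX R (Suc i) * \<alpha> a"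
    using chi_nonneg[of DX R "Suc i"] by (meson less_imp_le mult_mono)
  then show ?thesis unfolding drift_in_order[OF R i ab(1,2) True] by simp
qed (simp add: drift_def)

text \<open>By A4, putting the more attractive item a first does not raise the examination of the second
  position, and by A2 the first position is examined equally in both orders; hence the two orders
  of a pair average to a nonpositive drift.\<close>
lemma drift_swap_sum_nonpos:
  assumes R: "is_list K R" and i: "Suc i < K"
    and ab: "R ! i = a" "R ! Suc i = b" "1 \<le> a" "a < b" "b \<le> K"
    and cmp: "compared K h R a b" "compared K h (swap_pos R (Suc i) (Suc (Suc i))) a b"
  shows "drift h a b R + drift h a b (swap_pos R (Suc i) (Suc (Suc i))) \<le> 0"
proof -
  let ?R = "swap_pos R (Suc i) (Suc (Suc i))"
  have L: "Suc i < length R" using is_list_length[OF R] i by simp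
  have R': "is_list K ?R" using is_list_swap_adjacent[OF R i] .
  have swapped: "?R ! i = b" "?R ! Suc i = a" using nth_swap_adjacent[OF L] ab(1,2) by auto
  have drift': "drift h a b ?R = chi DX ?R (Suc i) * \<alpha> b - chi DX ?R (Suc (Suc i)) * \<alpha> a"
    using pos_nth[OF R', of i] pos_nth[OF R', of "Suc i"] i swapped cmp(2) unfolding drift_def by auto
  have "set (take i ?R) = set (take i R)" using set_take_swap_adjacent[OF L] by simp
  then have chi1: "chi DX ?R (Suc i) = chi DX R (Suc i)" using chi_prefix_invariant[OF R' R] i by auto
  have \<alpha>: "\<alpha> b < \<alpha> a" "0 < \<alpha> a" using \<alpha>_decreasing[OF ab(3-5)] \<alpha>_range[of a] ab(3-5) by auto
  have "chi DX (swap_pos ?R (Suc i) (Suc (Suc i))) (Suc (Suc i)) \<le> chi DX ?R (Suc (Suc i))"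
    using chi_swap_le[OF R', of "Suc i" "Suc (Suc i)"] i swapped \<alpha>(1) unfolding item_at_def by simp
  then have chi2: "chi DX R (Suc (Suc i)) \<le> chi DX ?R (Suc (Suc i))"
    unfolding swap_adjacent_involutive[OF L] .
  have "drift h a b R + drift h a b ?R
      \<le> chi DX R (Suc (Suc i)) * \<alpha> b - chi DX R (Suc i) * \<alpha> a
         + chi DX R (Suc i) * \<alpha> b - chi DX R (Suc (Suc i)) * \<alpha> a"
    unfolding drift_in_order[OF R i ab(1,2) cmp(1)] drift' chi1
    using chi2 \<alpha> by (simp add: mult_right_mono)
  also have "\<dots> = (chi DX R (Suc (Suc i)) + chi DX R (Suc i)) * (\<alpha> b - \<alpha> a)"
    by (simp add: algebra_simps)
  also have "\<dots> \<le> 0" using \<alpha> chi_nonneg[of DX R] by (intro mult_nonneg_nonpos) auto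
  finally show ?thesis .
qed

text \<open>If b is displayed ahead of a, soundness of s(b, a) guarantees that the pair is still
  randomized.\<close>
lemma rand_pair_drift_nonpos:
  assumes R: "is_list K R" and h: "h \<le> 1" and k: "k \<in> {1..(K - h) div 2}"
    and sound: "sound_stats K \<delta> s n" and ab: "1 \<le> a" "a < b" "b \<le> K"
    and pair: "pair_items h R k = {a, b}"
  shows "measure_pmf.expectation (rand_pair \<delta> h s n k R) (drift h a b) \<le> 0"
proof -
  define i where "i = 2*k-2+h"
  let ?R = "swap_pos R (Suc i) (Suc (Suc i))"
  have i: "Suc i < K" using pair_positions(3)[OF h k] unfolding i_def .
  have L: "Suc i < length R" using is_list_length[OF R] i by simp
  have E: "measure_pmf.expectation (rand_pair \<delta> h s n k R) (drift h a b) =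
    (if real_of_int (s (R ! i) (R ! Suc i)) \<le> conf_rad \<delta> (n (R ! i) (R ! Suc i))
     then (drift h a b ?R + drift h a b R) / 2 else drift h a b R)"
    unfolding i_def by (rule expectation_rand_pair) (use k in simp)
  have cmp: "compared K h R a b" using k pair unfolding compared_def by blast
  moreover have cmp': "compared K h ?R a b" using compared_swap[OF R h k] cmp unfolding i_def by simp
  moreover have "(R ! i = a \<and> R ! Suc i = b) \<or> (R ! i = b \<and> R ! Suc i = a)"
    using pair pair_positions(1)[OF h k] unfolding pair_items_def i_def[symmetric]
    by (auto simp: doubleton_eq_iff)
  ultimately show ?thesis
  proof (elim disjE conjE)
    assume "R ! i = a" "R ! Suc i = b"
    then have "drift h a b R \<le> 0" "drift h a b R + drift h a b ?R \<le> 0"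
      using drift_in_order_nonpos[OF R i _ _ ab] drift_swap_sum_nonpos[OF R i _ _ ab cmp cmp'] by auto
    then show ?thesis unfolding E by simp
  next
    assume down: "R ! i = b" "R ! Suc i = a"
    then have "?R ! i = a" "?R ! Suc i = b" using nth_swap_adjacent[OF L] by auto
    from drift_swap_sum_nonpos[OF is_list_swap_adjacent[OF R i] i this ab cmp'] cmp
    have "drift h a b ?R + drift h a b R \<le> 0" unfolding swap_adjacent_involutive[OF L] by simp
    moreover have "real_of_int (s (R ! i) (R ! Suc i)) \<le> conf_rad \<delta> (n (R ! i) (R ! Suc i))"
      using sound ab down unfolding sound_stats_def by auto
    ultimately show ?thesis unfolding E by simp
  qed
qed

lemma rand_pair_drift_unrelated:
  assumes R: "is_list K R" and h: "h \<le> 1" and k: "k \<in> {1..(K - h) div 2}"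
    and ne: "pair_items h R k \<noteq> {a, b}"
  shows "measure_pmf.expectation (rand_pair \<delta> h s n k R) (drift h a b) = drift h a b R"
proof -
  have k1: "1 \<le> k" using k by simp
  show ?thesis unfolding expectation_rand_pair[OF k1] drift_swap_unrelated[OF R h k ne] by simp
qed

lemma fold_rand_pair_drift:
  assumes h: "h \<le> 1" and sound: "sound_stats K \<delta> s n" and ab: "1 \<le> a" "a < b" "b \<le> K"
  shows "distinct ks \<Longrightarrow> set ks \<subseteq> {1..(K - h) div 2} \<Longrightarrow> is_list K R \<Longrightarrow>
    measure_pmf.expectation (fold (\<lambda>k M. bind_pmf M (rand_pair \<delta> h s n k)) ks (return_pmf R))
      (drift h a b)
    \<le> (if \<exists>k\<in>set ks. pair_items h R k = {a, b} then 0 else drift h a b R)"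
proof (induction ks arbitrary: R)
  case (Cons k ks)
  define E where "E = (\<lambda>R. measure_pmf.expectation
    (fold (\<lambda>k M. bind_pmf M (rand_pair \<delta> h s n k)) ks (return_pmf R)) (drift h a b))"
  define hit where "hit = (\<lambda>R. \<exists>k\<in>set ks. pair_items h R k = {a, b})"
  define i where "i = 2*k-2+h"
  let ?R = "swap_pos R (Suc i) (Suc (Suc i))"
  have k: "k \<in> {1..(K - h) div 2}" and ks: "distinct ks" "set ks \<subseteq> {1..(K - h) div 2}"
    and R: "is_list K R" using Cons.prems by auto
  have R': "is_list K ?R"
    using is_list_swap_adjacent[OF R pair_positions(3)[OF h k]] unfolding i_def .
  have "hit ?R = hit R" unfolding hit_def
  proof (rule bex_cong[OF refl])
    fix k' assume "k' \<in> set ks"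
    then have "k' \<in> {1..(K - h) div 2}" using ks(2) by blast
    then show "pair_items h ?R k' = {a, b} \<longleftrightarrow> pair_items h R k' = {a, b}"
      using pair_items_swap[OF R h k] unfolding i_def by simp
  qed
  then have IH: "E R \<le> (if hit R then 0 else drift h a b R)"
      "E ?R \<le> (if hit R then 0 else drift h a b ?R)"
    using Cons.IH[OF ks R] Cons.IH[OF ks R'] unfolding E_def hit_def by auto
  have "measure_pmf.expectation
      (fold (\<lambda>k M. bind_pmf M (rand_pair \<delta> h s n k)) (k # ks) (return_pmf R)) (drift h a b)
      = measure_pmf.expectation (rand_pair \<delta> h s n k R) E"
    unfolding fold_bind_pmf_Cons E_def using abs_drift_le_1 ab
    by (intro expectation_bind_pmf_bounded[where B=1]) auto
  also have "\<dots> \<le> (if hit R then 0 else measure_pmf.expectation (rand_pair \<delta> h s n k R) (drift h a b))"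
  proof -
    have "1 \<le> k" using k by simp
    then show ?thesis using IH unfolding expectation_rand_pair[OF \<open>1 \<le> k\<close>] i_def[symmetric] by auto
  qed
  also have "\<dots> \<le> (if \<exists>k'\<in>set (k # ks). pair_items h R k' = {a, b} then 0 else drift h a b R)"
    using rand_pair_drift_nonpos[OF R h k sound ab] rand_pair_drift_unrelated[OF R h k]
    unfolding hit_def by auto
  finally show ?case .
qed simp

lemma randomize_drift_nonpos:
  assumes "h \<le> 1" "sound_stats K \<delta> s n" "1 \<le> a" "a < b" "b \<le> K" "is_list K Rb"
  shows "measure_pmf.expectation (randomize \<delta> K h s n Rb) (drift h a b) \<le> 0"
proof -
  have "set [1..<(K - h) div 2 + 1] = {1..(K - h) div 2}" by auto
  then have "measure_pmf.expectation (randomize \<delta> K h s n Rb) (drift h a b)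
      \<le> (if compared K h Rb a b then 0 else drift h a b Rb)"
    using fold_rand_pair_drift[OF assms(1-5), of "[1..<(K - h) div 2 + 1]" Rb] assms(6)
    unfolding randomize_def compared_def by simp
  also have "\<dots> \<le> 0" unfolding drift_def by simp
  finally show ?thesis .
qed

section \<open>An exponential supermartingale\<close>

lemma prob_env_click:
  assumes a: "a \<in> {1..K}"
  shows "measure_pmf.prob (env \<alpha> K DX) {\<omega>. snd \<omega> R k \<and> fst \<omega> a} = chi DX R k * \<alpha> a"
proof -
  let ?f = "\<lambda>(A::nat \<Rightarrow> bool, X::nat list \<Rightarrow> nat \<Rightarrow> bool). (A a, X R k)"
  have "{\<omega>. snd \<omega> R k \<and> fst \<omega> a} = ?f -` ({True} \<times> {True})" by auto
  then have "measure_pmf.prob (env \<alpha> K DX) {\<omega>. snd \<omega> R k \<and> fst \<omega> a}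
      = measure_pmf.prob (map_pmf ?f (env \<alpha> K DX)) ({True} \<times> {True})"
    by (simp only: measure_map_pmf)
  also have "map_pmf ?f (env \<alpha> K DX)
      = pair_pmf (map_pmf (\<lambda>A. A a) (Pi_pmf {1..K} False (\<lambda>i. bernoulli_pmf (\<alpha> i))))
          (map_pmf (\<lambda>X. X R k) DX)"
    unfolding env_def by (rule map_pair)
  also have "map_pmf (\<lambda>A. A a) (Pi_pmf {1..K} False (\<lambda>i. bernoulli_pmf (\<alpha> i))) = bernoulli_pmf (\<alpha> a)"
    using Pi_pmf_component[of "{1..K}" a False "\<lambda>i. bernoulli_pmf (\<alpha> i)"] a by simp
  also have "measure_pmf.prob (pair_pmf (bernoulli_pmf (\<alpha> a)) (map_pmf (\<lambda>X. X R k) DX)) ({True} \<times> {True})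
      = measure_pmf.prob (bernoulli_pmf (\<alpha> a)) {True}
        * measure_pmf.prob (map_pmf (\<lambda>X. X R k) DX) {True}"
    by (rule measure_pmf_prob_product) auto
  also have "measure_pmf.prob (map_pmf (\<lambda>X. X R k) DX) {True} = chi DX R k"
    unfolding measure_map_pmf chi_def by (simp add: vimage_def)
  finally show ?thesis using \<alpha>_range[OF a] by (simp add: measure_pmf_single pmf_bernoulli_True)
qed

lemma expectation_click_factor_le:
  fixes e1 e2 :: real
  assumes a: "a \<in> {1..K}" and b: "b \<in> {1..K}"
    and e: "0 \<le> e1" "0 \<le> e2" "e2 \<le> 1" "e1 + e2 \<le> 2"
  shows "measure_pmf.expectation (env \<alpha> K DX)
     (\<lambda>\<omega>. if (snd \<omega> R k1 \<and> fst \<omega> b) \<and> \<not> (snd \<omega> R k2 \<and> fst \<omega> a) then e1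
          else if (snd \<omega> R k2 \<and> fst \<omega> a) \<and> \<not> (snd \<omega> R k1 \<and> fst \<omega> b) then e2 else 1)
     \<le> 1 + (1 - e2) * (chi DX R k1 * \<alpha> b - chi DX R k2 * \<alpha> a)"
proof -
  let ?M = "env \<alpha> K DX"
  define U where "U = {\<omega>::(nat \<Rightarrow> bool) \<times> (nat list \<Rightarrow> nat \<Rightarrow> bool). snd \<omega> R k1 \<and> fst \<omega> b}"
  define V where "V = {\<omega>::(nat \<Rightarrow> bool) \<times> (nat list \<Rightarrow> nat \<Rightarrow> bool). snd \<omega> R k2 \<and> fst \<omega> a}"
  have "(if (snd \<omega> R k1 \<and> fst \<omega> b) \<and> \<not> (snd \<omega> R k2 \<and> fst \<omega> a) then e1
          else if (snd \<omega> R k2 \<and> fst \<omega> a) \<and> \<not> (snd \<omega> R k1 \<and> fst \<omega> b) then e2 else 1)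
     = 1 + (e1 + e2 - 2) * indicator (U - V) \<omega> + (1 - e2) * (indicator U \<omega> - indicator V \<omega>)" for \<omega>
  proof -
    define P where "P = (snd \<omega> R k1 \<and> fst \<omega> b)"
    define Q where "Q = (snd \<omega> R k2 \<and> fst \<omega> a)"
    have "indicator U \<omega> = (if P then 1 else (0::real))" "indicator V \<omega> = (if Q then 1 else (0::real))"
      "indicator (U - V) \<omega> = (if P \<and> \<not> Q then 1 else (0::real))"
      unfolding U_def V_def P_def Q_def by simp_all
    then show ?thesis unfolding P_def[symmetric] Q_def[symmetric] by (cases P; cases Q) simp_all
  qed
  moreover have "integrable ?M (indicator S :: _ \<Rightarrow> real)" for S
    by (rule measure_pmf.integrable_const_bound[where B=1]) auto
  ultimately have "measure_pmf.expectation ?M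
     (\<lambda>\<omega>. if (snd \<omega> R k1 \<and> fst \<omega> b) \<and> \<not> (snd \<omega> R k2 \<and> fst \<omega> a) then e1
          else if (snd \<omega> R k2 \<and> fst \<omega> a) \<and> \<not> (snd \<omega> R k1 \<and> fst \<omega> b) then e2 else 1)
     = 1 + (e1 + e2 - 2) * measure_pmf.prob ?M (U - V)
         + (1 - e2) * (measure_pmf.prob ?M U - measure_pmf.prob ?M V)"
    by (simp add: integral_indicator)
  also have "\<dots> \<le> 1 + (1 - e2) * (measure_pmf.prob ?M U - measure_pmf.prob ?M V)"
    using e by (simp add: mult_nonpos_nonneg)
  also have "measure_pmf.prob ?M U = chi DX R k1 * \<alpha> b" unfolding U_def by (rule prob_env_click[OF b])
  also have "measure_pmf.prob ?M V = chi DX R k2 * \<alpha> a" unfolding V_def by (rule prob_env_click[OF a])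
  finally show ?thesis .
qed

lemma nn_integral_env_exp_tilt_le:
  assumes R: "is_list K R" and h: "h \<le> 1" and ab: "1 \<le> a" "a < b" "b \<le> K" and l: "0 \<le> l"
  shows "(\<integral>\<^sup>+\<omega>. ennreal (exp_tilt l a b (fst (next_state \<delta> K h s n Rb R \<omega>))
                                   (fst (snd (next_state \<delta> K h s n Rb R \<omega>)))) \<partial>env \<alpha> K DX)
       \<le> ennreal (exp_tilt l a b s n * (1 + (1 - exp (- l - l^2)) * drift h a b R))"
proof -
  define e1 where "e1 = exp (l - l^2)"
  define e2 where "e2 = exp (- l - l^2)"
  have ab': "a \<in> {1..K}" "b \<in> {1..K}" "a \<noteq> b" using ab by auto
  have e: "0 \<le> e1" "0 \<le> e2" "e2 \<le> 1" "e1 + e2 \<le> 2"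
    using exp_tilt_factor_bounds[OF l] unfolding e1_def e2_def by simp_all
  define \<psi> where "\<psi> = (\<lambda>\<omega>. if compared K h R a b then
       (if (snd \<omega> R (pos R b) \<and> fst \<omega> b) \<and> \<not> (snd \<omega> R (pos R a) \<and> fst \<omega> a) then e1
        else if (snd \<omega> R (pos R a) \<and> fst \<omega> a) \<and> \<not> (snd \<omega> R (pos R b) \<and> fst \<omega> b) then e2 else 1)
       else 1)"
  have \<psi>: "0 \<le> \<psi> \<omega>" "\<psi> \<omega> \<le> 2" for \<omega> unfolding \<psi>_def using e by auto
  have "(\<integral>\<^sup>+\<omega>. ennreal (exp_tilt l a b (fst (next_state \<delta> K h s n Rb R \<omega>))
                                   (fst (snd (next_state \<delta> K h s n Rb R \<omega>)))) \<partial>env \<alpha> K DX)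
      = (\<integral>\<^sup>+\<omega>. ennreal (exp_tilt l a b s n * \<psi> \<omega>) \<partial>env \<alpha> K DX)"
    unfolding exp_tilt_next_state[OF R h ab'] \<psi>_def e1_def e2_def ..
  also have "\<dots> = ennreal (exp_tilt l a b s n * measure_pmf.expectation (env \<alpha> K DX) \<psi>)"
    using \<psi> exp_tilt_pos[of l a b s n] by (subst nn_integral_eq_integral)
      (auto intro!: measure_pmf.integrable_const_bound[where B=2])
  also have "\<dots> \<le> ennreal (exp_tilt l a b s n * (1 + (1 - e2) * drift h a b R))"
  proof (intro ennreal_leI mult_left_mono)
    show "measure_pmf.expectation (env \<alpha> K DX) \<psi> \<le> 1 + (1 - e2) * drift h a b R"
      using expectation_click_factor_le[OF ab'(1,2) e, of R "pos R b" "pos R a"]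
      unfolding \<psi>_def drift_def by (cases "compared K h R a b") simp_all
  qed (simp add: less_imp_le[OF exp_tilt_pos])
  finally show ?thesis unfolding e2_def .
qed

lemma exp_tilt_supermartingale:
  assumes Rb: "is_list K Rb" and sound: "sound_stats K \<delta> s n" and h: "h \<le> 1"
    and ab: "1 \<le> a" "a < b" "b \<le> K" and l: "0 \<le> l"
  shows "(\<integral>\<^sup>+R. \<integral>\<^sup>+\<omega>. ennreal (exp_tilt l a b (fst (next_state \<delta> K h s n Rb R \<omega>))
                                        (fst (snd (next_state \<delta> K h s n Rb R \<omega>))))
            \<partial>env \<alpha> K DX \<partial>randomize \<delta> K h s n Rb)
     \<le> ennreal (exp_tilt l a b s n)"
proof -
  define T where "T = exp_tilt l a b s n"
  define e2 where "e2 = exp (- l - l^2)"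
  define g where "g = (\<lambda>R. T * (1 + (1 - e2) * drift h a b R))"
  have e2: "0 \<le> e2" "e2 \<le> 1" using exp_tilt_factor_bounds(1)[OF l] unfolding e2_def by simp_all
  have drift: "\<bar>drift h a b R\<bar> \<le> 1" for R using abs_drift_le_1 ab by simp
  have bound: "\<bar>(1 - e2) * drift h a b R\<bar> \<le> 1" for R
    using mult_mono[OF _ drift[of R], of "\<bar>1 - e2\<bar>" 1] e2 by (simp add: abs_mult)
  have "0 \<le> 1 + (1 - e2) * drift h a b R \<and> 1 + (1 - e2) * drift h a b R \<le> 2" for R
    using bound[of R] by (simp add: abs_le_iff)
  then have g: "0 \<le> g R" "g R \<le> T * 2" for R
    using exp_tilt_pos[of l a b s n] unfolding g_def T_def
    by (simp_all add: mult.commute[of T] mult_right_mono)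
  have "(\<integral>\<^sup>+R. \<integral>\<^sup>+\<omega>. ennreal (exp_tilt l a b (fst (next_state \<delta> K h s n Rb R \<omega>))
                                        (fst (snd (next_state \<delta> K h s n Rb R \<omega>))))
            \<partial>env \<alpha> K DX \<partial>randomize \<delta> K h s n Rb)
     \<le> (\<integral>\<^sup>+R. ennreal (g R) \<partial>randomize \<delta> K h s n Rb)"
    using nn_integral_env_exp_tilt_le[OF _ h ab l] randomize_support[OF Rb h]
    unfolding g_def T_def e2_def by (intro nn_integral_mono_AE) (auto simp: AE_measure_pmf_iff)
  also have "\<dots> = ennreal (measure_pmf.expectation (randomize \<delta> K h s n Rb) g)"
    using g by (subst nn_integral_eq_integral)
      (auto intro!: measure_pmf.integrable_const_bound[where B="T * 2"])
  also have "measure_pmf.expectation (randomize \<delta> K h s n Rb) g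
      = T * (1 + (1 - e2) * measure_pmf.expectation (randomize \<delta> K h s n Rb) (drift h a b))"
    using drift unfolding g_def
    by (simp add: measure_pmf.integrable_const_bound[where B=1] integral_add integral_mult_right)
  also have "\<dots> \<le> T"
    using randomize_drift_nonpos[OF h sound ab Rb] e2 exp_tilt_pos[of l a b s n]
    by (simp add: T_def mult_nonneg_nonpos mult_left_le)
  finally show ?thesis unfolding T_def by (simp add: ennreal_leI)
qed

section \<open>The potential and its stopped version\<close>

definition chernoff_param :: "nat \<Rightarrow> real" where
  "chernoff_param m = sqrt (ln (1 / \<delta>) / real m)"

definition ordered_pairs :: "(nat \<times> nat) set" where
  "ordered_pairs = {(a, b). 1 \<le> a \<and> a < b \<and> b \<le> K}"

text \<open>Summing over every count m \<le> N, with the parameter tuned to m, replaces a union bound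
  over the random number of comparisons of a pair.\<close>
definition potential :: "nat \<Rightarrow> stats \<Rightarrow> counts \<Rightarrow> real" where
  "potential N s n = \<delta> * (\<Sum>(a, b)\<in>ordered_pairs. \<Sum>m\<in>{1..N}. exp_tilt (chernoff_param m) a b s n)"

definition stats_bounded :: "nat \<Rightarrow> stats \<Rightarrow> counts \<Rightarrow> bool" where
  "stats_bounded N s n \<longleftrightarrow> (\<forall>(a, b)\<in>ordered_pairs. \<bar>s b a\<bar> \<le> int (n b a) \<and> n b a \<le> N)"

lemma stats_bounded_mono: "t \<le> N \<Longrightarrow> stats_bounded t s n \<Longrightarrow> stats_bounded N s n"
  unfolding stats_bounded_def by fastforce

lemma ln_inverse_delta_pos: "0 < ln (1 / \<delta>)"
  using \<delta>_pos \<delta>_less_1 by simp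

lemma finite_ordered_pairs: "finite ordered_pairs"
  by (rule finite_subset[of _ "{1..K} \<times> {1..K}"]) (auto simp: ordered_pairs_def)

lemma card_ordered_pairs_le: "card ordered_pairs \<le> K^2"
proof -
  have "card ordered_pairs \<le> card ({1..K} \<times> {1..K})"
    by (rule card_mono) (auto simp: ordered_pairs_def)
  then show ?thesis by (simp add: card_cartesian_product power2_eq_square)
qed

lemma potential_nonneg: "0 \<le> potential N s n"
  unfolding potential_def using \<delta>_pos exp_tilt_pos
  by (intro mult_nonneg_nonneg sum_nonneg)
    (auto simp: less_imp_le intro!: sum_nonneg split: prod.splits)

lemma potential_init_le: "potential N (\<lambda>_ _. 0) (\<lambda>_ _. 0) \<le> \<delta> * real K ^ 2 * real N"
proof -
  have "potential N (\<lambda>_ _. 0) (\<lambda>_ _. 0) = \<delta> * real (card ordered_pairs) * real N"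
    unfolding potential_def exp_tilt_def by (simp add: case_prod_beta)
  also have "\<dots> \<le> \<delta> * real K ^ 2 * real N"
    using card_ordered_pairs_le \<delta>_pos
    by (intro mult_right_mono mult_left_mono) (auto simp flip: of_nat_power)
  finally show ?thesis .
qed

lemma nn_integral_potential_br_step:
  assumes Rb: "is_list K Rb" and sound: "sound_stats K \<delta> s n"
  shows "(\<integral>\<^sup>+x. ennreal (potential N (fst (snd x)) (fst (snd (snd x))))
            \<partial>br_step \<alpha> DX \<delta> K t (s, n, Rb))
     \<le> ennreal (potential N s n)"
proof -
  let ?M = "br_step \<alpha> DX \<delta> K t (s, n, Rb)"
  let ?T = "\<lambda>m a b s n. ennreal (exp_tilt (chernoff_param m) a b s n)"
  have split: "ennreal (potential N s' n')
      = ennreal \<delta> * (\<Sum>(a, b)\<in>ordered_pairs. \<Sum>m\<in>{1..N}. ?T m a b s' n')" for s' n'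
    unfolding potential_def using \<delta>_pos exp_tilt_pos
    by (simp add: ennreal_mult case_prod_beta sum_nonneg less_imp_le)
  have "(\<integral>\<^sup>+x. ennreal (potential N (fst (snd x)) (fst (snd (snd x)))) \<partial>?M)
      = ennreal \<delta> * (\<Sum>(a, b)\<in>ordered_pairs. \<Sum>m\<in>{1..N}.
                         \<integral>\<^sup>+x. ?T m a b (fst (snd x)) (fst (snd (snd x))) \<partial>?M)"
    unfolding split by (simp add: nn_integral_cmult nn_integral_sum case_prod_beta)
  also have "\<dots> \<le> ennreal \<delta> * (\<Sum>(a, b)\<in>ordered_pairs. \<Sum>m\<in>{1..N}. ?T m a b s n)"
  proof (intro mult_left_mono sum_mono, clarify, intro sum_mono)
    fix a b m assume "(a, b) \<in> ordered_pairs"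
    then have ab: "1 \<le> a" "a < b" "b \<le> K" unfolding ordered_pairs_def by auto
    have l: "0 \<le> chernoff_param m" unfolding chernoff_param_def using ln_inverse_delta_pos by simp
    show "(\<integral>\<^sup>+x. ?T m a b (fst (snd x)) (fst (snd (snd x))) \<partial>?M) \<le> ?T m a b s n"
      unfolding nn_integral_br_step fst_conv snd_conv
      by (rule exp_tilt_supermartingale[OF Rb sound _ ab l]) simp
  qed simp
  also have "\<dots> = ennreal (potential N s n)" unfolding split ..
  finally show ?thesis .
qed

lemma potential_ge_1_if_unsound:
  assumes bounded: "stats_bounded N s n" and unsound: "\<not> sound_stats K \<delta> s n"
  shows "1 \<le> potential N s n"
proof -
  obtain a b where ab: "1 \<le> a" "a < b" "b \<le> K" and gt: "real_of_int (s b a) > conf_rad \<delta> (n b a)"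
    using unsound unfolding sound_stats_def by force
  have p: "(a, b) \<in> ordered_pairs" unfolding ordered_pairs_def using ab by auto
  define m where "m = n b a"
  define L where "L = ln (1 / \<delta>)"
  have bd: "\<bar>s b a\<bar> \<le> int m" "m \<le> N" using bounded p unfolding stats_bounded_def m_def by auto
  have "m \<noteq> 0"
  proof
    assume "m = 0"
    then show False using gt bd unfolding m_def conf_rad_def by simp
  qed
  then have m: "0 < real m" by simp
  have L: "0 < L" unfolding L_def by (rule ln_inverse_delta_pos)
  have lam: "chernoff_param m * (2 * sqrt (real m * L)) = 2 * L" "(chernoff_param m)^2 * real m = L"
    unfolding chernoff_param_def L_def[symmetric] using sqrt_div_mult_sqrt_mult[OF m] L m by simp_all
  have "chernoff_param m * (2 * sqrt (real m * L)) < chernoff_param m * real_of_int (s b a)"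
    using gt L m unfolding conf_rad_def m_def[symmetric] L_def[symmetric] chernoff_param_def by simp
  then have "L < chernoff_param m * real_of_int (s b a) - (chernoff_param m)^2 * real (n b a)"
    unfolding lam m_def[symmetric] by simp
  then have "exp L < exp_tilt (chernoff_param m) a b s n" unfolding exp_tilt_def by simp
  moreover have "exp L = 1 / \<delta>" unfolding L_def using \<delta>_pos by simp
  ultimately have "1 < \<delta> * exp_tilt (chernoff_param m) a b s n" using \<delta>_pos by (simp add: field_simps)
  also have "exp_tilt (chernoff_param m) a b s n \<le> (\<Sum>m'\<in>{1..N}. exp_tilt (chernoff_param m') a b s n)"
    using \<open>m \<noteq> 0\<close> bd exp_tilt_pos by (intro member_le_sum) (auto simp: less_imp_le)
  also have "\<dots> \<le> (\<Sum>(a, b)\<in>ordered_pairs. \<Sum>m\<in>{1..N}. exp_tilt (chernoff_param m) a b s n)"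
    using member_le_sum[OF p, of "\<lambda>(a, b). \<Sum>m\<in>{1..N}. exp_tilt (chernoff_param m) a b s n"]
      finite_ordered_pairs exp_tilt_pos by (simp add: sum_nonneg less_imp_le case_prod_beta)
  finally show ?thesis unfolding potential_def using \<delta>_pos by (simp add: mult_left_mono)
qed

text \<open>The bounds on the statistics by their counts, and of the counts by the number of rounds,
  keep an unsound statistic within reach of the potential.\<close>
definition on_track :: "nat list \<Rightarrow> nat list list \<Rightarrow> stats \<Rightarrow> counts \<Rightarrow> nat list \<Rightarrow> bool" where
  "on_track R0 Rs s n Rb \<longleftrightarrow> is_list K Rb \<and> card (inv_pairs K Rb) \<le> card (inv_pairs K R0) \<and>
     (\<forall>R\<in>set Rs. real (card (inv_pairs K R)) \<le> real (card (inv_pairs K R0)) + real K / 2) \<and>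
     sound_stats K \<delta> s n \<and> stats_bounded (length Rs) s n"

text \<open>Frozen at 1 once the run leaves the track, so it dominates the indicator of leaving it;
  while on track it is a supermartingale because the potential is.\<close>
definition stopped_potential :: "nat \<Rightarrow> nat list \<Rightarrow> nat list list \<times> br_state \<Rightarrow> real" where
  "stopped_potential N R0 x =
     (case x of (Rs, s, n, Rb) \<Rightarrow> if on_track R0 Rs s n Rb then min 1 (potential N s n) else 1)"

lemma stopped_potential_le_1: "stopped_potential N R0 x \<le> 1"
  unfolding stopped_potential_def by (auto split: prod.splits)

lemma stats_bounded_next_state:
  assumes R: "is_list K R" and h: "h \<le> 1" and bounded: "stats_bounded t s n"
  shows "stats_bounded (Suc t)
           (fst (next_state \<delta> K h s n Rb R \<omega>)) (fst (snd (next_state \<delta> K h s n Rb R \<omega>)))"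
  unfolding stats_bounded_def
proof clarify
  fix a b assume "(a, b) \<in> ordered_pairs"
  then have ab: "a \<noteq> b" and "\<bar>s b a\<bar> \<le> int (n b a)" "n b a \<le> t"
    using bounded unfolding stats_bounded_def ordered_pairs_def by auto
  moreover obtain s' n'
    where upd: "fold (upd_pair h R (clicks R \<omega>)) [1..<(K - h) div 2 + 1] (s, n) = (s', n')"
    by fastforce
  ultimately show "\<bar>fst (next_state \<delta> K h s n Rb R \<omega>) b a\<bar>
      \<le> int (fst (snd (next_state \<delta> K h s n Rb R \<omega>)) b a)
      \<and> fst (snd (next_state \<delta> K h s n Rb R \<omega>)) b a \<le> Suc t"
    unfolding next_state_def Let_def upd fst_conv snd_conv stats_update_round[OF R h ab upd]
    by (cases "compared K h R a b"; cases "clicks R \<omega> (pos R b)"; cases "clicks R \<omega> (pos R a)") auto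
qed

lemma br_step_on_track:
  assumes track: "on_track R0 Rs s n Rb"
    and step: "(R, s', n', Rb') \<in> set_pmf (br_step \<alpha> DX \<delta> K t (s, n, Rb))"
  shows "real (card (inv_pairs K R)) \<le> real (card (inv_pairs K R0)) + real K / 2"
    and "stats_bounded (Suc (length Rs)) s' n'"
    and "sound_stats K \<delta> s' n' \<Longrightarrow> is_list K Rb' \<and> card (inv_pairs K Rb') \<le> card (inv_pairs K R0)"
proof -
  define h where "h = t mod 2"
  have h: "h \<le> 1" unfolding h_def by simp
  have Rb: "is_list K Rb" and inv_Rb: "card (inv_pairs K Rb) \<le> card (inv_pairs K R0)"
    and bounded: "stats_bounded (length Rs) s n"
    using track unfolding on_track_def by auto
  obtain \<omega> where R: "R \<in> set_pmf (randomize \<delta> K h s n Rb)"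
    and st: "(s', n', Rb') = next_state \<delta> K h s n Rb R \<omega>"
    using set_pmf_br_step[OF step] unfolding h_def by blast
  have R_list: "is_list K R" and inv_R: "card (inv_pairs K R) \<le> card (inv_pairs K Rb) + (K - h) div 2"
    using randomize_support[OF Rb h R] by auto
  show "real (card (inv_pairs K R)) \<le> real (card (inv_pairs K R0)) + real K / 2"
    using inv_R inv_Rb by linarith
  show "stats_bounded (Suc (length Rs)) s' n'"
    using stats_bounded_next_state[OF R_list h bounded, of Rb \<omega>] st by (metis fst_conv snd_conv)
  assume sound': "sound_stats K \<delta> s' n'"
  have "Rb' = fold (bubble_step \<delta> s' n') [1..<K] Rb"
    using st unfolding next_state_def Let_def by (simp add: split_beta)
  then have "is_list K Rb' \<and> inv_pairs K Rb' \<subseteq> inv_pairs K Rb"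
    using fold_bubble_step_sound[OF sound' Rb] by auto
  moreover from this have "card (inv_pairs K Rb') \<le> card (inv_pairs K Rb)"
    using finite_inv_pairs by (intro card_mono) auto
  ultimately show "is_list K Rb' \<and> card (inv_pairs K Rb') \<le> card (inv_pairs K R0)"
    using inv_Rb by simp
qed

lemma nn_integral_stopped_potential_br_step:
  assumes len: "length Rs + 1 \<le> N"
  shows "(\<integral>\<^sup>+y. ennreal (stopped_potential N R0 (Rs @ [fst y], snd y)) \<partial>br_step \<alpha> DX \<delta> K t (s, n, Rb))
     \<le> ennreal (stopped_potential N R0 (Rs, s, n, Rb))"
proof -
  let ?M = "br_step \<alpha> DX \<delta> K t (s, n, Rb)"
  have "(\<integral>\<^sup>+y. ennreal (stopped_potential N R0 (Rs @ [fst y], snd y)) \<partial>?M) \<le> (\<integral>\<^sup>+y. 1 \<partial>?M)"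
    using stopped_potential_le_1 by (intro nn_integral_mono) simp
  then have le_1: "(\<integral>\<^sup>+y. ennreal (stopped_potential N R0 (Rs @ [fst y], snd y)) \<partial>?M) \<le> 1"
    by (simp add: measure_pmf.emeasure_space_1)
  show ?thesis
  proof (cases "on_track R0 Rs s n Rb")
    case False
    then show ?thesis using le_1 unfolding stopped_potential_def by simp
  next
    case True
    have Rb: "is_list K Rb" and sound: "sound_stats K \<delta> s n" using True unfolding on_track_def by auto
    have "stopped_potential N R0 (Rs @ [R], s', n', Rb') \<le> potential N s' n'"
      if "(R, s', n', Rb') \<in> set_pmf ?M" for R s' n' Rb'
    proof (cases "sound_stats K \<delta> s' n'")
      case sound': True
      have "on_track R0 (Rs @ [R]) s' n' Rb'"
        using br_step_on_track[OF True that] sound' True unfolding on_track_def by auto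
      then show ?thesis unfolding stopped_potential_def by simp
    next
      case False
      have "stats_bounded N s' n'"
        using stats_bounded_mono[OF _ br_step_on_track(2)[OF True that]] len by simp
      then have "1 \<le> potential N s' n'" by (rule potential_ge_1_if_unsound[OF _ False])
      then show ?thesis using stopped_potential_le_1[of N R0 "(Rs @ [R], s', n', Rb')"] by linarith
    qed
    then have "(\<integral>\<^sup>+y. ennreal (stopped_potential N R0 (Rs @ [fst y], snd y)) \<partial>?M)
        \<le> (\<integral>\<^sup>+y. ennreal (potential N (fst (snd y)) (fst (snd (snd y)))) \<partial>?M)"
      by (intro nn_integral_mono_AE) (auto simp: AE_measure_pmf_iff ennreal_leI)
    also have "\<dots> \<le> ennreal (potential N s n)" by (rule nn_integral_potential_br_step[OF Rb sound])
    finally have "(\<integral>\<^sup>+y. ennreal (stopped_potential N R0 (Rs @ [fst y], snd y)) \<partial>?M)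
        \<le> ennreal (potential N s n)" .
    then show ?thesis using le_1 True unfolding stopped_potential_def by (simp add: min_def)
  qed
qed

lemma length_br_run: "x \<in> set_pmf (br_run \<alpha> DX \<delta> K R0 t) \<Longrightarrow> length (fst x) = t"
  by (induction t arbitrary: x) (auto simp: split_beta)

lemma nn_integral_stopped_potential_br_run:
  assumes R0: "is_list K R0" and t: "t \<le> N"
  shows "(\<integral>\<^sup>+x. ennreal (stopped_potential N R0 x) \<partial>br_run \<alpha> DX \<delta> K R0 t)
     \<le> ennreal (potential N (\<lambda>_ _. 0) (\<lambda>_ _. 0))"
  using t
proof (induction t)
  case 0
  have "on_track R0 [] (\<lambda>_ _. 0) (\<lambda>_ _. 0) R0"
    unfolding on_track_def sound_stats_def stats_bounded_def conf_rad_def using R0 by simp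
  then show ?case by (simp add: stopped_potential_def ennreal_leI)
next
  case (Suc t)
  have "(\<integral>\<^sup>+x. ennreal (stopped_potential N R0 x) \<partial>br_run \<alpha> DX \<delta> K R0 (Suc t))
     = (\<integral>\<^sup>+z. \<integral>\<^sup>+y. ennreal (stopped_potential N R0 (fst z @ [fst y], snd y))
          \<partial>br_step \<alpha> DX \<delta> K (Suc t) (snd z) \<partial>br_run \<alpha> DX \<delta> K R0 t)"
    by (simp add: nn_integral_map_pmf split_beta)
  also have "\<dots> \<le> (\<integral>\<^sup>+z. ennreal (stopped_potential N R0 z) \<partial>br_run \<alpha> DX \<delta> K R0 t)"
  proof (intro nn_integral_mono_AE, unfold AE_measure_pmf_iff, intro ballI)
    fix z assume z: "z \<in> set_pmf (br_run \<alpha> DX \<delta> K R0 t)"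
    obtain Rs s n Rb where z_eq: "z = (Rs, s, n, Rb)" by (cases z) auto
    have "length Rs + 1 \<le> N" using length_br_run[OF z] z_eq Suc.prems by simp
    then show "(\<integral>\<^sup>+y. ennreal (stopped_potential N R0 (fst z @ [fst y], snd y))
        \<partial>br_step \<alpha> DX \<delta> K (Suc t) (snd z))
       \<le> ennreal (stopped_potential N R0 z)"
      unfolding z_eq fst_conv snd_conv by (rule nn_integral_stopped_potential_br_step)
  qed
  also have "\<dots> \<le> ennreal (potential N (\<lambda>_ _. 0) (\<lambda>_ _. 0))" using Suc by simp
  finally show ?case .
qed

lemma prob_displayed_inversions_bounded:
  assumes R0: "is_list K R0"
  shows "measure_pmf.prob (displayed \<alpha> DX \<delta> K R0 N)
           {Rs. \<forall>R \<in> set Rs. real (card (inv_pairs K R)) \<le> real (card (inv_pairs K R0)) + real K / 2}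
         \<ge> 1 - \<delta> * real K ^ 2 * real N"
proof -
  define Good where
    "Good = {Rs. \<forall>R \<in> set Rs. real (card (inv_pairs K R)) \<le> real (card (inv_pairs K R0)) + real K / 2}"
  define Bad :: "(nat list list \<times> br_state) set" where "Bad = {x. fst x \<notin> Good}"
  let ?M = "br_run \<alpha> DX \<delta> K R0 N"
  have "indicator Bad x \<le> ennreal (stopped_potential N R0 x)" for x
  proof (cases "x \<in> Bad")
    case True
    obtain Rs s n Rb where "x = (Rs, s, n, Rb)" by (cases x) auto
    with True show ?thesis unfolding Bad_def Good_def stopped_potential_def on_track_def by auto
  qed simp
  then have "emeasure ?M Bad \<le> (\<integral>\<^sup>+x. ennreal (stopped_potential N R0 x) \<partial>?M)"
    by (simp flip: nn_integral_indicator add: nn_integral_mono)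
  also have "\<dots> \<le> ennreal (potential N (\<lambda>_ _. 0) (\<lambda>_ _. 0))"
    by (rule nn_integral_stopped_potential_br_run[OF R0 order_refl])
  finally have "measure_pmf.prob ?M Bad \<le> potential N (\<lambda>_ _. 0) (\<lambda>_ _. 0)"
    using potential_nonneg by (simp add: measure_pmf.emeasure_eq_measure)
  moreover have "measure_pmf.prob (displayed \<alpha> DX \<delta> K R0 N) Good = 1 - measure_pmf.prob ?M Bad"
  proof -
    have "fst -` Good = UNIV - Bad" unfolding Bad_def by auto
    then show ?thesis
      unfolding displayed_def measure_map_pmf using measure_pmf.prob_compl[of Bad ?M] by simp
  qed
  ultimately show ?thesis unfolding Good_def[symmetric] using potential_init_le[of N] by linarith
qed

end

theorem lemma1:
  fixes K n :: nat and \<alpha> :: "nat \<Rightarrow> real" and DX :: "(nat list \<Rightarrow> nat \<Rightarrow> bool) pmf"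
    and \<delta> :: real and R0 :: "nat list"
  assumes "0 < \<delta>" and "\<delta> < 1"
    and "is_list K R0"
    and "\<And>i j. 1 \<le> i \<Longrightarrow> i < j \<Longrightarrow> j \<le> K \<Longrightarrow> \<alpha> i > \<alpha> j"
    and "\<And>i. i \<in> {1..K} \<Longrightarrow> 0 < \<alpha> i \<and> \<alpha> i \<le> 1"
    and "click_assms K \<alpha> DX"
  shows "measure_pmf.prob (displayed \<alpha> DX \<delta> K R0 n)
           {Rs. \<forall>R \<in> set Rs. real (card (inv_pairs K R)) \<le> real (card (inv_pairs K R0)) + real K / 2}
         \<ge> 1 - sqrt \<delta> * real K ^ 2 * real n"
proof -
  interpret bubblerank_model K \<alpha> DX \<delta>
    by unfold_locales (use assms in auto)
  have "\<delta> \<le> sqrt \<delta>"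
    using assms(1,2) by (simp add: real_le_rsqrt power2_eq_square mult_le_cancel_right1 less_imp_le)
  then have "\<delta> * real K ^ 2 * real n \<le> sqrt \<delta> * real K ^ 2 * real n"
    by (intro mult_right_mono) auto
  then show ?thesis using prob_displayed_inversions_bounded[OF assms(3), of n] by linarith
qed

end
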